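(* Let $k\in\mathbb N^*$, $\alpha\in\mathbb R$, $\kappa>0$. The operator $\mathbf G=-i(\mathbf L\mathbf b^\dagger+\mathbf L^\dagger\mathbf b)-\frac\kappa2\mathbf b^\dagger\mathbf b$ with $\mathbf L=\mathbf a^k-\alpha^k\mathbf 1$, defined first on $\mathcal H^{2k,2}$, is closable, and its closure $(\mathbf G,\mathcal D(\mathbf G),\mathcal H)$ is maximally dissipative (hence generates a strongly continuous contraction semigroup on $\mathcal H$); moreover $\mathcal D(\mathbf G)\subset\mathcal H^{0,1}=\mathcal D(\mathbf b)$.
   Context: $\mathcal H_a,\mathcal H_b$ are copies of $L^2(\mathbb R,\mathbb C)$, $\mathcal H=\mathcal H_a\otimes\mathcal H_b$ with Fock basis $|n\rangle\otimes|m\rangle$; $\mathbf a,\mathbf b$ are the annihilation operators on the two factors. For $p,q\in\mathbb R$, $\mathcal H^{p,q}=\{\sum_{n,m}\psi_{n,m}|n\rangle\otimes|m\rangle : \sum_{n,m}(1+n^p+m^q)|\psi_{n,m}|^2<\infty\}$ with the corresponding weighted inner product. Maximally dissipative means $\mathrm{Re}\langle u|\mathbf Gu\rangle\le0$ on $\mathcal D(\mathbf G)$ and $\mathbf G-\lambda$ has dense (equivalently full) range for some $\lambda>0$. *)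

theory Defs
  imports "HOL-Analysis.Analysis"
begin

text \<open>States of H = H_a (x) H_b are represented by their coefficient families
  psi :: nat \<times> nat \<Rightarrow> complex in the Fock basis |n> (x) |m>.\<close>

type_synonym state = "nat \<times> nat \<Rightarrow> complex"

definition in_H :: "state \<Rightarrow> bool" where
  "in_H \<psi> \<longleftrightarrow> (\<lambda>p. (cmod (\<psi> p))\<^sup>2) summable_on UNIV"

definition in_Hpq :: "nat \<Rightarrow> nat \<Rightarrow> state \<Rightarrow> bool" where
  "in_Hpq p q \<psi> \<longleftrightarrow>
     (\<lambda>(n,m). (1 + real n ^ p + real m ^ q) * (cmod (\<psi> (n,m)))\<^sup>2) summable_on UNIV"

definition H_inner :: "state \<Rightarrow> state \<Rightarrow> complex" where
  "H_inner u v = (\<Sum>\<^sub>\<infinity>p. cnj (u p) * v p)"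

definition H_norm :: "state \<Rightarrow> real" where
  "H_norm \<psi> = sqrt (\<Sum>\<^sub>\<infinity>p. (cmod (\<psi> p))\<^sup>2)"

definition H_conv :: "(nat \<Rightarrow> state) \<Rightarrow> state \<Rightarrow> bool" where
  "H_conv s x \<longleftrightarrow> in_H x \<and> (\<forall>j. in_H (s j)) \<and>
     (\<lambda>j. H_norm (\<lambda>p. s j p - x p)) \<longlonglongrightarrow> 0"

definition ann_a :: "state \<Rightarrow> state" where
  "ann_a \<psi> = (\<lambda>(n,m). complex_of_real (sqrt (real (n+1))) * \<psi> (n+1, m))"
definition cre_a :: "state \<Rightarrow> state" where
  "cre_a \<psi> = (\<lambda>(n,m). if n = 0 then 0 else complex_of_real (sqrt (real n)) * \<psi> (n-1, m))"
definition ann_b :: "state \<Rightarrow> state" where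
  "ann_b \<psi> = (\<lambda>(n,m). complex_of_real (sqrt (real (m+1))) * \<psi> (n, m+1))"
definition cre_b :: "state \<Rightarrow> state" where
  "cre_b \<psi> = (\<lambda>(n,m). if m = 0 then 0 else complex_of_real (sqrt (real m)) * \<psi> (n, m-1))"

definition opL :: "nat \<Rightarrow> real \<Rightarrow> state \<Rightarrow> state" where
  "opL k \<alpha> \<psi> = (\<lambda>p. (ann_a ^^ k) \<psi> p - complex_of_real (\<alpha> ^ k) * \<psi> p)"
definition opLdag :: "nat \<Rightarrow> real \<Rightarrow> state \<Rightarrow> state" where
  "opLdag k \<alpha> \<psi> = (\<lambda>p. (cre_a ^^ k) \<psi> p - complex_of_real (\<alpha> ^ k) * \<psi> p)"

definition opG :: "nat \<Rightarrow> real \<Rightarrow> real \<Rightarrow> state \<Rightarrow> state" where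
  "opG k \<alpha> \<kappa> \<psi> = (\<lambda>p. - \<i> * (opL k \<alpha> (cre_b \<psi>) p + opLdag k \<alpha> (ann_b \<psi>) p)
                        - complex_of_real (\<kappa> / 2) * cre_b (ann_b \<psi>) p)"

definition closure_graph :: "state set \<Rightarrow> (state \<Rightarrow> state) \<Rightarrow> (state \<times> state) set" where
  "closure_graph D T = {(x, y). \<exists>s. (\<forall>j. s j \<in> D) \<and> H_conv s x \<and> H_conv (\<lambda>j. T (s j)) y}"

definition closable :: "state set \<Rightarrow> (state \<Rightarrow> state) \<Rightarrow> bool" where
  "closable D T \<longleftrightarrow> (\<forall>y. ((\<lambda>_. 0), y) \<in> closure_graph D T \<longrightarrow> y = (\<lambda>_. 0))"

definition closure_dom :: "state set \<Rightarrow> (state \<Rightarrow> state) \<Rightarrow> state set" where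
  "closure_dom D T = {x. \<exists>y. (x, y) \<in> closure_graph D T}"

definition closure_op :: "state set \<Rightarrow> (state \<Rightarrow> state) \<Rightarrow> state \<Rightarrow> state" where
  "closure_op D T x = (THE y. (x, y) \<in> closure_graph D T)"

definition max_dissipative :: "state set \<Rightarrow> (state \<Rightarrow> state) \<Rightarrow> bool" where
  "max_dissipative Dom T \<longleftrightarrow>
     (\<forall>u\<in>Dom. in_H u \<and> in_H (T u)) \<and>
     (\<forall>u\<in>Dom. Re (H_inner u (T u)) \<le> 0) \<and>
     (\<exists>l>0. \<forall>f. in_H f \<longrightarrow> (\<exists>u\<in>Dom. (\<lambda>p. T u p - complex_of_real l * u p) = f))"

end

theory Submission
  imports Defs "HOL-Library.Function_Algebras"
begin

(* Write G = A + B, where B = i alpha^k (b + b^dagger) is the only part depending on alpha.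
   Each coefficient of G psi depends on finitely many coefficients of psi, so limits in the
   graph are pointwise limits: G is closable and its closure acts by the same formula.
   On the core, Re <psi, G psi> = -kappa/2 <psi, b^dagger b psi>; this passes to the closure
   and there bounds the H^{0,1} norm.  A conserves n + k m, so A - lambda splits into finite
   blocks on which dissipativity makes it invertible, with
   |(A - lambda)^-1 w|_{H^{0,1}}^2 <= (2 + 1/kappa)/lambda |w|^2.  Since B is bounded from
   H^{0,1} to H, for large lambda the equation (A + B - lambda) v = f is solved by a
   contraction in H^{0,1}, and truncating v along n + k m shows that v lies in the domain
   of the closure. *)

lemma mult_le_sum_squares:
  fixes x y :: real
  assumes "0 \<le> x" "0 \<le> y" shows "x * y \<le> x\<^sup>2 + y\<^sup>2"
  using sum_squares_bound[of x y] mult_nonneg_nonneg[OF assms] by linarith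

lemma norm_add_square_le:
  fixes a b :: "'a::real_normed_vector"
  shows "(norm (a + b))\<^sup>2 \<le> 2 * (norm a)\<^sup>2 + 2 * (norm b)\<^sup>2"
proof -
  have "(norm (a + b))\<^sup>2 \<le> (norm a + norm b)\<^sup>2"
    by (intro power_mono norm_triangle_ineq) simp
  also have "\<dots> \<le> 2 * (norm a)\<^sup>2 + 2 * (norm b)\<^sup>2"
    using sum_squares_bound[of "norm a" "norm b"] by (simp add: power2_sum)
  finally show ?thesis .
qed

lemma cnj_mult_self: "cnj z * z = of_real ((cmod z)\<^sup>2)"
  by (metis complex_norm_square mult.commute of_real_power)

lemma infsum_diff:
  fixes f g :: "'a \<Rightarrow> 'b::{topological_ab_group_add, t2_space}"
  assumes "f summable_on A" "g summable_on A"
  shows "(\<Sum>\<^sub>\<infinity>x\<in>A. f x - g x) = infsum f A - infsum g A"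
  using infsum_add[OF assms(1) summable_on_uminus[THEN iffD2, OF assms(2)]] infsum_uminus[of g A]
  by simp

lemma summable_on_diff:
  fixes f g :: "'a \<Rightarrow> 'b::topological_ab_group_add"
  assumes "f summable_on A" "g summable_on A"
  shows "(\<lambda>x. f x - g x) summable_on A"
  using summable_on_add[OF assms(1) summable_on_uminus[THEN iffD2, OF assms(2)]] by simp

lemma infsum_of_real:
  assumes "f summable_on A"
  shows "(\<Sum>\<^sub>\<infinity>x\<in>A. of_real (f x) :: 'a::{real_normed_algebra_1, real_normed_div_algebra}) = of_real (infsum f A)"
  using has_sum_of_real[OF has_sum_infsum[OF assms]] by (rule infsumI)

section \<open>Square-summable coefficient families\<close>

definition H_sqnorm :: "state \<Rightarrow> real" where
  "H_sqnorm \<psi> = (\<Sum>\<^sub>\<infinity>p. (cmod (\<psi> p))\<^sup>2)"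

lemma H_sqnorm_nonneg: "H_sqnorm \<psi> \<ge> 0"
  unfolding H_sqnorm_def by (intro infsum_nonneg) simp

lemma H_norm_eq_sqrt: "H_norm \<psi> = sqrt (H_sqnorm \<psi>)"
  by (simp add: H_norm_def H_sqnorm_def)

lemma H_norm_nonneg: "H_norm \<psi> \<ge> 0"
  by (simp add: H_norm_eq_sqrt H_sqnorm_nonneg)

lemma H_norm_square: "(H_norm \<psi>)\<^sup>2 = H_sqnorm \<psi>"
  by (simp add: H_norm_eq_sqrt H_sqnorm_nonneg)

lemma H_norm_le_iff_sqnorm: "0 \<le> e \<Longrightarrow> H_norm \<psi> \<le> e \<longleftrightarrow> H_sqnorm \<psi> \<le> e\<^sup>2"
  by (simp add: H_norm_eq_sqrt real_sqrt_le_iff' H_sqnorm_nonneg)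

lemma finite_sums_bounded_imp_in_H:
  assumes "\<And>F. finite F \<Longrightarrow> (\<Sum>p\<in>F. (cmod (\<psi> p))\<^sup>2) \<le> B"
  shows "in_H \<psi>" and "H_sqnorm \<psi> \<le> B"
proof -
  have s: "(\<lambda>p. (cmod (\<psi> p))\<^sup>2) summable_on UNIV"
    by (rule nonneg_bdd_above_summable_on) (auto intro!: bdd_aboveI2 assms)
  then show "in_H \<psi>" by (simp add: in_H_def)
  show "H_sqnorm \<psi> \<le> B" unfolding H_sqnorm_def
    by (rule infsum_le_finite_sums[OF s]) (auto intro: assms)
qed

lemma sum_le_H_sqnorm:
  assumes "in_H \<psi>" "finite F"
  shows "(\<Sum>p\<in>F. (cmod (\<psi> p))\<^sup>2) \<le> H_sqnorm \<psi>"
  unfolding H_sqnorm_def using assms by (intro finite_sum_le_infsum) (auto simp: in_H_def)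

lemma norm_le_H_norm:
  assumes "in_H \<psi>" shows "cmod (\<psi> p) \<le> H_norm \<psi>"
  using sum_le_H_sqnorm[OF assms, of "{p}"]
  by (simp add: H_norm_eq_sqrt real_le_rsqrt)

lemma H_sqnorm_eq_0_imp:
  assumes "in_H \<psi>" "H_sqnorm \<psi> = 0" shows "\<psi> = (\<lambda>_. 0)"
proof
  fix p show "\<psi> p = 0" using sum_le_H_sqnorm[OF assms(1), of "{p}"] assms(2) by simp
qed

lemma in_H_mono:
  assumes "in_H \<psi>" "\<And>p. cmod (\<phi> p) \<le> c * cmod (\<psi> p)"
  shows "in_H \<phi>"
  unfolding in_H_def
proof (rule summable_on_comparison_test)
  show "(\<lambda>p. c\<^sup>2 * (cmod (\<psi> p))\<^sup>2) summable_on UNIV"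
    using assms(1) by (auto simp: in_H_def intro: summable_on_cmult_right)
  fix p
  have "cmod (\<phi> p) \<le> \<bar>c\<bar> * cmod (\<psi> p)"
    using assms(2)[of p] abs_ge_self[of c] mult_right_mono[OF _ norm_ge_zero, of c "\<bar>c\<bar>" "\<psi> p"]
    by linarith
  then have "(cmod (\<phi> p))\<^sup>2 \<le> (\<bar>c\<bar> * cmod (\<psi> p))\<^sup>2"
    by (intro power_mono) auto
  then show "(cmod (\<phi> p))\<^sup>2 \<le> c\<^sup>2 * (cmod (\<psi> p))\<^sup>2"
    by (simp add: power_mult_distrib)
qed auto

lemma in_H_add:
  assumes "in_H a" "in_H b" shows "in_H (\<lambda>p. a p + b p)"
  unfolding in_H_def
proof (rule summable_on_comparison_test)
  show "(\<lambda>p. 2 * (cmod (a p))\<^sup>2 + 2 * (cmod (b p))\<^sup>2) summable_on UNIV"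
    using assms by (auto simp: in_H_def intro!: summable_on_add summable_on_cmult_right)
qed (simp_all add: norm_add_square_le)

lemma in_H_cmult: "in_H a \<Longrightarrow> in_H (\<lambda>p. c * a p)"
  by (rule in_H_mono[where c="cmod c"]) (auto simp: norm_mult)

lemma in_H_diff: "in_H a \<Longrightarrow> in_H b \<Longrightarrow> in_H (\<lambda>p. a p - b p)"
  using in_H_add[of a "\<lambda>p. -1 * b p"] in_H_cmult[of b "-1"] by simp

lemma in_H_zero: "in_H (\<lambda>_. 0)"
  by (simp add: in_H_def)

lemma H_sqnorm_mono:
  assumes "in_H \<psi>" "\<And>p. cmod (\<phi> p) \<le> cmod (\<psi> p)"
  shows "H_sqnorm \<phi> \<le> H_sqnorm \<psi>"
proof (rule finite_sums_bounded_imp_in_H(2))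
  fix F :: "(nat \<times> nat) set" assume "finite F"
  have "(\<Sum>p\<in>F. (cmod (\<phi> p))\<^sup>2) \<le> (\<Sum>p\<in>F. (cmod (\<psi> p))\<^sup>2)"
    using assms(2) by (intro sum_mono power_mono) auto
  also have "\<dots> \<le> H_sqnorm \<psi>"
    by (rule sum_le_H_sqnorm[OF assms(1) \<open>finite F\<close>])
  finally show "(\<Sum>p\<in>F. (cmod (\<phi> p))\<^sup>2) \<le> H_sqnorm \<psi>" .
qed

lemma in_H_finite_support:
  assumes "finite {p. \<psi> p \<noteq> 0}" shows "in_H \<psi>"
  unfolding in_H_def
  by (rule summable_on_cong_neutral[THEN iffD1, rotated -1, OF summable_on_finite[OF assms]]) auto

lemma H_norm_triangle:
  assumes "in_H a" "in_H b"
  shows "H_norm (\<lambda>p. a p + b p) \<le> H_norm a + H_norm b"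
proof -
  have L2: "L2_set (\<lambda>p. cmod (\<psi> p)) F \<le> H_norm \<psi>" if "in_H \<psi>" "finite F" for \<psi> F
    unfolding L2_set_def H_norm_eq_sqrt using sum_le_H_sqnorm[OF that] by simp
  have "H_sqnorm (\<lambda>p. a p + b p) \<le> (H_norm a + H_norm b)\<^sup>2"
  proof (rule finite_sums_bounded_imp_in_H(2))
    fix F :: "(nat \<times> nat) set" assume F: "finite F"
    have "L2_set (\<lambda>p. cmod (a p + b p)) F \<le> L2_set (\<lambda>p. cmod (a p) + cmod (b p)) F"
      by (rule L2_set_mono) (auto intro: norm_triangle_ineq)
    also have "\<dots> \<le> L2_set (\<lambda>p. cmod (a p)) F + L2_set (\<lambda>p. cmod (b p)) F"
      by (rule L2_set_triangle_ineq)
    also have "\<dots> \<le> H_norm a + H_norm b"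
      using L2[OF assms(1) F] L2[OF assms(2) F] by linarith
    finally have "(L2_set (\<lambda>p. cmod (a p + b p)) F)\<^sup>2 \<le> (H_norm a + H_norm b)\<^sup>2"
      by (intro power_mono) (auto simp: L2_set_nonneg)
    then show "(\<Sum>p\<in>F. (cmod (a p + b p))\<^sup>2) \<le> (H_norm a + H_norm b)\<^sup>2"
      unfolding L2_set_def by (simp add: sum_nonneg)
  qed
  then show ?thesis
    by (simp add: H_norm_le_iff_sqnorm H_norm_nonneg add_nonneg_nonneg)
qed

lemma H_sqnorm_cmult: "H_sqnorm (\<lambda>p. c * \<psi> p) = (cmod c)\<^sup>2 * H_sqnorm \<psi>"
  unfolding H_sqnorm_def by (simp add: norm_mult power_mult_distrib infsum_cmult_right')

lemma H_norm_uminus: "H_norm (\<lambda>p. - \<psi> p) = H_norm \<psi>"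
  by (simp add: H_norm_def)

lemma H_norm_minus_commute: "H_norm (\<lambda>p. a p - b p) = H_norm (\<lambda>p. b p - a p)"
  by (simp add: H_norm_def norm_minus_commute)

lemma H_norm_diff_triangle:
  assumes "in_H a" "in_H b" "in_H c"
  shows "H_norm (\<lambda>p. a p - c p) \<le> H_norm (\<lambda>p. a p - b p) + H_norm (\<lambda>p. b p - c p)"
  using H_norm_triangle[OF in_H_diff[OF assms(1,2)] in_H_diff[OF assms(2,3)]] by simp

lemma summable_norm_cnj_mult:
  assumes "in_H a" "in_H b"
  shows "(\<lambda>p. norm (cnj (a p) * b p)) summable_on UNIV"
proof (rule summable_on_comparison_test)
  show "(\<lambda>p. (cmod (a p))\<^sup>2 + (cmod (b p))\<^sup>2) summable_on UNIV"
    using assms by (auto simp: in_H_def intro!: summable_on_add)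
  fix p
  have "cmod (a p) * cmod (b p) \<le> (cmod (a p))\<^sup>2 + (cmod (b p))\<^sup>2"
    by (rule mult_le_sum_squares) simp_all
  then show "norm (cnj (a p) * b p) \<le> (cmod (a p))\<^sup>2 + (cmod (b p))\<^sup>2"
    by (simp add: norm_mult)
qed auto

lemma H_inner_Cauchy_Schwarz:
  assumes "in_H a" "in_H b"
  shows "cmod (H_inner a b) \<le> H_norm a * H_norm b"
proof -
  have "(\<Sum>\<^sub>\<infinity>p. norm (cnj (a p) * b p)) \<le> H_norm a * H_norm b"
  proof (rule infsum_le_finite_sums[OF summable_norm_cnj_mult[OF assms]])
    fix F :: "(nat \<times> nat) set" assume F: "finite F"
    have "(\<Sum>p\<in>F. norm (cnj (a p) * b p)) \<le> L2_set (\<lambda>p. cmod (a p)) F * L2_set (\<lambda>p. cmod (b p)) F"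
      using L2_set_mult_ineq[of "\<lambda>p. cmod (a p)" "\<lambda>p. cmod (b p)" F] by (simp add: norm_mult)
    also have "\<dots> \<le> H_norm a * H_norm b"
      using sum_le_H_sqnorm[OF assms(1) F] sum_le_H_sqnorm[OF assms(2) F]
      by (intro mult_mono) (auto simp: L2_set_def H_norm_eq_sqrt L2_set_nonneg H_sqnorm_nonneg sum_nonneg)
    finally show "(\<Sum>p\<in>F. norm (cnj (a p) * b p)) \<le> H_norm a * H_norm b" .
  qed
  then show ?thesis
    unfolding H_inner_def
    using norm_infsum_bound[OF summable_norm_cnj_mult[OF assms]] by linarith
qed

lemma H_inner_diff_left:
  assumes "in_H a" "in_H b" "in_H c"
  shows "H_inner (\<lambda>p. a p - b p) c = H_inner a c - H_inner b c"
proof -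
  have "H_inner (\<lambda>p. a p - b p) c = (\<Sum>\<^sub>\<infinity>p. cnj (a p) * c p - cnj (b p) * c p)"
    unfolding H_inner_def by (simp add: left_diff_distrib)
  then show ?thesis
    unfolding H_inner_def
    using infsum_diff[OF abs_summable_summable[OF summable_norm_cnj_mult[OF assms(1,3)]]
                         abs_summable_summable[OF summable_norm_cnj_mult[OF assms(2,3)]]]
    by simp
qed

lemma H_inner_diff_right:
  assumes "in_H a" "in_H b" "in_H c"
  shows "H_inner c (\<lambda>p. a p - b p) = H_inner c a - H_inner c b"
proof -
  have "H_inner c (\<lambda>p. a p - b p) = (\<Sum>\<^sub>\<infinity>p. cnj (c p) * a p - cnj (c p) * b p)"
    unfolding H_inner_def by (simp add: right_diff_distrib)
  then show ?thesis
    unfolding H_inner_def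
    using infsum_diff[OF abs_summable_summable[OF summable_norm_cnj_mult[OF assms(3,1)]]
                         abs_summable_summable[OF summable_norm_cnj_mult[OF assms(3,2)]]]
    by simp
qed

lemma H_inner_self:
  assumes "in_H a" shows "H_inner a a = of_real (H_sqnorm a)"
proof -
  have "cnj (a p) * a p = of_real ((cmod (a p))\<^sup>2)" for p
    using complex_norm_square[of "a p"] by (simp add: mult.commute)
  then show ?thesis
    using infsum_of_real[of "\<lambda>p. (cmod (a p))\<^sup>2" UNIV] assms
    by (simp add: H_inner_def H_sqnorm_def in_H_def)
qed

lemma H_conv_pointwise:
  assumes "H_conv s x" shows "(\<lambda>j. s j p) \<longlonglongrightarrow> x p"
proof -
  from assms have x: "in_H x" and s: "\<And>j. in_H (s j)"
    and lim: "(\<lambda>j. H_norm (\<lambda>p. s j p - x p)) \<longlonglongrightarrow> 0"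
    by (simp_all add: H_conv_def)
  have "norm (s j p - x p) \<le> H_norm (\<lambda>p. s j p - x p)" for j
    using norm_le_H_norm[OF in_H_diff[OF s x]] by simp
  then have "(\<lambda>j. s j p - x p) \<longlonglongrightarrow> 0"
    by (intro Lim_null_comparison[OF always_eventually lim]) simp
  then show ?thesis by (simp add: LIM_zero_iff)
qed

lemma H_convI:
  assumes "in_H x" "\<And>j. in_H (s j)" "\<And>j. H_norm (\<lambda>p. s j p - x p) \<le> b j" "b \<longlonglongrightarrow> 0"
  shows "H_conv s x"
proof -
  have "(\<lambda>j. H_norm (\<lambda>p. s j p - x p)) \<longlonglongrightarrow> 0"
    by (rule Lim_null_comparison[OF always_eventually assms(4)]) (use assms(3) H_norm_nonneg in auto)
  then show ?thesis using assms by (simp add: H_conv_def)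
qed

lemma H_conv_bounded:
  assumes "H_conv s x" shows "\<exists>B. \<forall>j. H_norm (s j) \<le> B"
proof -
  from assms have x: "in_H x" and s: "\<And>j. in_H (s j)"
    and "(\<lambda>j. H_norm (\<lambda>p. s j p - x p)) \<longlonglongrightarrow> 0"
    by (auto simp: H_conv_def)
  then have "Bseq (\<lambda>j. H_norm (\<lambda>p. s j p - x p))"
    by (intro convergent_imp_Bseq convergentI)
  then obtain C where C: "\<And>j. norm (H_norm (\<lambda>p. s j p - x p)) \<le> C"
    by (auto simp: Bseq_def)
  have "H_norm (s j) \<le> C + H_norm x" for j
    using H_norm_triangle[OF in_H_diff[OF s x] x, of j] C[of j] by simp
  then show ?thesis by blast
qed

lemma pointwise_limit_in_H:
  assumes "\<And>p. (\<lambda>j. s j p) \<longlonglongrightarrow> x p"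
    and "eventually (\<lambda>j. in_H (s j) \<and> H_sqnorm (s j) \<le> B) sequentially"
  shows "in_H x" and "H_sqnorm x \<le> B"
proof -
  have sums: "(\<Sum>p\<in>F. (cmod (x p))\<^sup>2) \<le> B" if F: "finite F" for F
  proof (rule tendsto_upperbound)
    show "(\<lambda>j. \<Sum>p\<in>F. (cmod (s j p))\<^sup>2) \<longlonglongrightarrow> (\<Sum>p\<in>F. (cmod (x p))\<^sup>2)"
      by (intro tendsto_intros assms(1))
    show "eventually (\<lambda>j. (\<Sum>p\<in>F. (cmod (s j p))\<^sup>2) \<le> B) sequentially"
    proof (rule eventually_mono[OF assms(2)])
      fix j assume "in_H (s j) \<and> H_sqnorm (s j) \<le> B"
      then show "(\<Sum>p\<in>F. (cmod (s j p))\<^sup>2) \<le> B"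
        using sum_le_H_sqnorm[of "s j" F] F by linarith
    qed
  qed simp
  show "in_H x" by (rule finite_sums_bounded_imp_in_H(1)[OF sums])
  show "H_sqnorm x \<le> B" by (rule finite_sums_bounded_imp_in_H(2)[OF sums])
qed

lemma H_Cauchy_pointwise_limit:
  assumes s: "\<And>j. in_H (s j)"
    and Cauchy: "\<And>e. e > 0 \<Longrightarrow> \<exists>J. \<forall>i\<ge>J. \<forall>j\<ge>J. H_norm (\<lambda>p. s i p - s j p) \<le> e"
  shows "\<exists>x. \<forall>p. (\<lambda>j. s j p) \<longlonglongrightarrow> x p"
proof -
  have "Cauchy (\<lambda>j. s j p)" for p
  proof (rule metric_CauchyI)
    fix e :: real assume "e > 0"
    then obtain J where J: "\<forall>i\<ge>J. \<forall>j\<ge>J. H_norm (\<lambda>p. s i p - s j p) \<le> e / 2"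
      using Cauchy[of "e / 2"] by auto
    have "dist (s i p) (s j p) < e" if "i \<ge> J" "j \<ge> J" for i j
    proof -
      have "dist (s i p) (s j p) \<le> H_norm (\<lambda>p. s i p - s j p)"
        using norm_le_H_norm[OF in_H_diff[OF s[of i] s[of j]], of p] by (simp add: dist_norm)
      also have "\<dots> \<le> e / 2" using J that by blast
      finally show ?thesis using \<open>e > 0\<close> by simp
    qed
    then show "\<exists>J. \<forall>i\<ge>J. \<forall>j\<ge>J. dist (s i p) (s j p) < e" by blast
  qed
  then show ?thesis
    by (intro exI[of _ "\<lambda>p. lim (\<lambda>j. s j p)"]) (simp add: Cauchy_convergent_iff convergent_LIMSEQ_iff)
qed

lemma H_complete:
  assumes s: "\<And>j. in_H (s j)"
    and Cauchy: "\<And>e. e > 0 \<Longrightarrow> \<exists>J. \<forall>i\<ge>J. \<forall>j\<ge>J. H_norm (\<lambda>p. s i p - s j p) \<le> e"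
  shows "\<exists>x. H_conv s x"
proof -
  obtain x where x: "\<And>p. (\<lambda>j. s j p) \<longlonglongrightarrow> x p"
    using H_Cauchy_pointwise_limit[OF s Cauchy] by blast
  have tail: "in_H (\<lambda>p. x p - s j p) \<and> H_norm (\<lambda>p. x p - s j p) \<le> e"
    if "e > 0" and J: "\<forall>i\<ge>J. \<forall>j\<ge>J. H_norm (\<lambda>p. s i p - s j p) \<le> e" and "j \<ge> J" for e J j
  proof -
    have ev: "eventually (\<lambda>i. in_H (\<lambda>p. s i p - s j p) \<and> H_sqnorm (\<lambda>p. s i p - s j p) \<le> e\<^sup>2) sequentially"
    proof (rule eventually_mono[OF eventually_ge_at_top[of J]])
      fix i assume "J \<le> i"
      then have "H_norm (\<lambda>p. s i p - s j p) \<le> e" using J \<open>j \<ge> J\<close> by blast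
      then show "in_H (\<lambda>p. s i p - s j p) \<and> H_sqnorm (\<lambda>p. s i p - s j p) \<le> e\<^sup>2"
        using H_norm_le_iff_sqnorm[of e] \<open>e > 0\<close> in_H_diff[OF s s] by simp
    qed
    have lim: "\<And>p. (\<lambda>i. s i p - s j p) \<longlonglongrightarrow> x p - s j p"
      by (intro tendsto_intros x)
    have "in_H (\<lambda>p. x p - s j p)" "H_sqnorm (\<lambda>p. x p - s j p) \<le> e\<^sup>2"
      by (rule pointwise_limit_in_H[OF lim ev])+
    then show ?thesis
      using H_norm_le_iff_sqnorm[of e] \<open>e > 0\<close> by simp
  qed
  obtain J1 where "\<forall>i\<ge>J1. \<forall>j\<ge>J1. H_norm (\<lambda>p. s i p - s j p) \<le> 1"
    using Cauchy[of 1] by auto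
  then have "in_H (\<lambda>p. (x p - s J1 p) + s J1 p)"
    using tail[of 1 J1 J1] by (intro in_H_add s) auto
  then have xH: "in_H x" by simp
  have "(\<lambda>j. H_norm (\<lambda>p. s j p - x p)) \<longlonglongrightarrow> 0"
  proof (rule LIMSEQ_I)
    fix r :: real assume "r > 0"
    then obtain J where J: "\<forall>i\<ge>J. \<forall>j\<ge>J. H_norm (\<lambda>p. s i p - s j p) \<le> r / 2"
      using Cauchy[of "r / 2"] by auto
    have "norm (H_norm (\<lambda>p. s n p - x p) - 0) < r" if "n \<ge> J" for n
      using tail[of "r / 2" J n] J that \<open>r > 0\<close> H_norm_minus_commute[of "s n" x]
      by (simp add: H_norm_nonneg)
    then show "\<exists>J. \<forall>n\<ge>J. norm (H_norm (\<lambda>p. s n p - x p) - 0) < r" by blast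
  qed
  then have "H_conv s x" using xH s by (simp add: H_conv_def)
  then show ?thesis by blast
qed

lemma H_tail_tendsto_0:
  fixes f :: "nat \<times> nat \<Rightarrow> nat"
  assumes \<psi>: "in_H \<psi>"
  shows "(\<lambda>N. H_norm (\<lambda>p. if f p \<le> N then 0 else \<psi> p)) \<longlonglongrightarrow> 0"
proof (rule LIMSEQ_I)
  fix r :: real assume r: "r > 0"
  let ?g = "\<lambda>p. (cmod (\<psi> p))\<^sup>2"
  have "(?g has_sum H_sqnorm \<psi>) UNIV"
    using \<psi> unfolding in_H_def H_sqnorm_def by (simp add: has_sum_infsum)
  then have "eventually (\<lambda>X. dist (sum ?g X) (H_sqnorm \<psi>) < r\<^sup>2) (finite_subsets_at_top UNIV)"
    using r unfolding has_sum_def by (intro tendstoD) auto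
  then obtain X where X: "finite X" "dist (sum ?g X) (H_sqnorm \<psi>) < r\<^sup>2"
    unfolding eventually_finite_subsets_at_top by blast
  define N0 where "N0 = (\<Sum>p\<in>X. f p)"
  have "norm (H_norm (\<lambda>p. if f p \<le> N then 0 else \<psi> p) - 0) < r" if "N0 \<le> N" for N
  proof -
    have XN: "f p \<le> N" if "p \<in> X" for p
      using member_le_sum[of p X f] \<open>N0 \<le> N\<close> X(1) that by (simp add: N0_def)
    have tail: "(\<Sum>p\<in>F. (cmod (if f p \<le> N then 0 else \<psi> p))\<^sup>2) \<le> H_sqnorm \<psi> - sum ?g X"
      if F: "finite F" for F
    proof -
      have "(\<Sum>p\<in>F. (cmod (if f p \<le> N then 0 else \<psi> p))\<^sup>2) = sum ?g {p\<in>F. \<not> f p \<le> N}"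
        using F by (intro sum.mono_neutral_cong_right) auto
      also have "\<dots> = sum ?g ({p\<in>F. \<not> f p \<le> N} \<union> X) - sum ?g X"
        using F X(1) XN by (subst sum.union_disjoint) auto
      also have "sum ?g ({p\<in>F. \<not> f p \<le> N} \<union> X) \<le> H_sqnorm \<psi>"
        using sum_le_H_sqnorm[OF \<psi>] F X(1) by simp
      finally show ?thesis by simp
    qed
    have "H_sqnorm (\<lambda>p. if f p \<le> N then 0 else \<psi> p) \<le> H_sqnorm \<psi> - sum ?g X"
      by (rule finite_sums_bounded_imp_in_H(2)[OF tail])
    moreover have "H_sqnorm \<psi> - sum ?g X < r\<^sup>2"
      using X(2) by (simp add: dist_real_def)
    ultimately have "H_sqnorm (\<lambda>p. if f p \<le> N then 0 else \<psi> p) < r\<^sup>2"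
      by linarith
    then have "sqrt (H_sqnorm (\<lambda>p. if f p \<le> N then 0 else \<psi> p)) < sqrt (r\<^sup>2)"
      by (rule real_sqrt_less_mono)
    then show ?thesis
      using r H_norm_nonneg[of "\<lambda>p. if f p \<le> N then 0 else \<psi> p"] by (simp add: H_norm_eq_sqrt)
  qed
  then show "\<exists>N0. \<forall>N\<ge>N0. norm (H_norm (\<lambda>p. if f p \<le> N then 0 else \<psi> p) - 0) < r" by blast
qed

lemma H_conv_truncation:
  fixes f :: "nat \<times> nat \<Rightarrow> nat"
  assumes "in_H \<psi>"
  shows "H_conv (\<lambda>N p. if f p \<le> N then \<psi> p else 0) \<psi>"
proof (rule H_convI[OF assms])
  show "in_H (\<lambda>p. if f p \<le> N then \<psi> p else 0)" for N
    by (rule in_H_mono[OF assms, of _ 1]) simp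
  show "H_norm (\<lambda>p. (if f p \<le> N then \<psi> p else 0) - \<psi> p) \<le> H_norm (\<lambda>p. if f p \<le> N then 0 else \<psi> p)"
    for N
  proof -
    have "(\<lambda>p. (if f p \<le> N then \<psi> p else 0) - \<psi> p) = (\<lambda>p. - (if f p \<le> N then 0 else \<psi> p))"
      by (simp add: fun_eq_iff)
    then show ?thesis by (simp add: H_norm_uminus)
  qed
  show "(\<lambda>N. H_norm (\<lambda>p. if f p \<le> N then 0 else \<psi> p)) \<longlonglongrightarrow> 0"
    by (rule H_tail_tendsto_0[OF assms])
qed

lemma H_inner_tendsto:
  assumes "H_conv s x" "H_conv t y"
  shows "(\<lambda>j. H_inner (s j) (t j)) \<longlonglongrightarrow> H_inner x y"
proof -
  from assms have x: "in_H x" and s: "\<And>j. in_H (s j)" and cs: "(\<lambda>j. H_norm (\<lambda>p. s j p - x p)) \<longlonglongrightarrow> 0"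
    and y: "in_H y" and t: "\<And>j. in_H (t j)" and ct: "(\<lambda>j. H_norm (\<lambda>p. t j p - y p)) \<longlonglongrightarrow> 0"
    by (auto simp: H_conv_def)
  have bound: "norm (H_inner (s j) (t j) - H_inner x y)
      \<le> H_norm (\<lambda>p. s j p - x p) * (H_norm (\<lambda>p. t j p - y p) + H_norm y)
         + H_norm x * H_norm (\<lambda>p. t j p - y p)" for j
  proof -
    have "H_inner (s j) (t j) - H_inner x y
        = H_inner (\<lambda>p. s j p - x p) (t j) + H_inner x (\<lambda>p. t j p - y p)"
      using H_inner_diff_left[OF s x t, of j] H_inner_diff_right[OF t y x, of j] by simp
    then have "norm (H_inner (s j) (t j) - H_inner x y)
        \<le> norm (H_inner (\<lambda>p. s j p - x p) (t j)) + norm (H_inner x (\<lambda>p. t j p - y p))"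
      by (simp add: norm_triangle_ineq)
    also have "\<dots> \<le> H_norm (\<lambda>p. s j p - x p) * H_norm (t j) + H_norm x * H_norm (\<lambda>p. t j p - y p)"
      by (intro add_mono H_inner_Cauchy_Schwarz in_H_diff s t x y)
    finally have "norm (H_inner (s j) (t j) - H_inner x y)
        \<le> H_norm (\<lambda>p. s j p - x p) * H_norm (t j) + H_norm x * H_norm (\<lambda>p. t j p - y p)" .
    moreover have "H_norm (t j) \<le> H_norm (\<lambda>p. t j p - y p) + H_norm y"
      using H_norm_triangle[OF in_H_diff[OF t y] y, of j] by simp
    then have "H_norm (\<lambda>p. s j p - x p) * H_norm (t j)
        \<le> H_norm (\<lambda>p. s j p - x p) * (H_norm (\<lambda>p. t j p - y p) + H_norm y)"
      by (rule mult_left_mono) (rule H_norm_nonneg)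
    ultimately show ?thesis by linarith
  qed
  have "(\<lambda>j. H_norm (\<lambda>p. s j p - x p) * (H_norm (\<lambda>p. t j p - y p) + H_norm y)
                + H_norm x * H_norm (\<lambda>p. t j p - y p)) \<longlonglongrightarrow> 0 * (0 + H_norm y) + H_norm x * 0"
    by (intro tendsto_intros cs ct)
  then have "(\<lambda>j. H_inner (s j) (t j) - H_inner x y) \<longlonglongrightarrow> 0"
    by (intro Lim_null_comparison[OF always_eventually, OF allI, OF bound]) simp
  then show ?thesis by (simp add: LIM_zero_iff)
qed

lemma H_Cauchy_if_geometric:
  assumes u: "\<And>j. in_H (u j)"
    and inc: "\<And>j. H_norm (\<lambda>p. u (Suc j) p - u j p) \<le> C * q ^ j"
    and q: "0 \<le> q" "q < 1" and "e > 0"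
  shows "\<exists>J. \<forall>i\<ge>J. \<forall>j\<ge>J. H_norm (\<lambda>p. u i p - u j p) \<le> e"
proof -
  have "C \<ge> 0"
    using inc[of 0] H_norm_nonneg[of "\<lambda>p. u (Suc 0) p - u 0 p"] by simp
  have telescope: "H_norm (\<lambda>p. u i p - u j p) \<le> C * (q ^ j - q ^ i) / (1 - q)" if "j \<le> i" for i j
    using that
  proof (induction i rule: dec_induct)
    case (step i)
    have "H_norm (\<lambda>p. u (Suc i) p - u j p)
        \<le> H_norm (\<lambda>p. u (Suc i) p - u i p) + H_norm (\<lambda>p. u i p - u j p)"
      by (rule H_norm_diff_triangle[OF u u u])
    also have "\<dots> \<le> C * q ^ i + C * (q ^ j - q ^ i) / (1 - q)"
      using step.IH inc[of i] by linarith
    also have "\<dots> = C * (q ^ j - q ^ Suc i) / (1 - q)"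
      using q by (simp add: field_simps)
    finally show ?case .
  qed (simp add: H_norm_def)
  have "(\<lambda>j. C / (1 - q) * q ^ j) \<longlonglongrightarrow> C / (1 - q) * 0"
    using q by (intro tendsto_intros LIMSEQ_power_zero) auto
  then have lim: "(\<lambda>j. C / (1 - q) * q ^ j) \<longlonglongrightarrow> 0" by simp
  have "eventually (\<lambda>j. C / (1 - q) * q ^ j < e) sequentially"
    using order_tendstoD(2)[OF lim \<open>e > 0\<close>] .
  then obtain J where J: "C / (1 - q) * q ^ J < e"
    by (auto simp: eventually_sequentially)
  have "H_norm (\<lambda>p. u i p - u j p) \<le> e" if "J \<le> j" "j \<le> i" for i j
  proof -
    have "C * (q ^ j - q ^ i) \<le> C * q ^ j"
      using mult_nonneg_nonneg[OF \<open>C \<ge> 0\<close> zero_le_power[OF q(1), of i]]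
      by (simp add: right_diff_distrib)
    then have "C * (q ^ j - q ^ i) / (1 - q) \<le> C / (1 - q) * q ^ j"
      using q divide_right_mono[of _ _ "1 - q"] by simp
    then have "H_norm (\<lambda>p. u i p - u j p) \<le> C / (1 - q) * q ^ j"
      using telescope[OF \<open>j \<le> i\<close>] by linarith
    also have "\<dots> \<le> C / (1 - q) * q ^ J"
      using q \<open>C \<ge> 0\<close> \<open>J \<le> j\<close> by (intro mult_left_mono power_decreasing) auto
    finally show ?thesis using J by linarith
  qed
  moreover note H_norm_minus_commute
  ultimately have "H_norm (\<lambda>p. u i p - u j p) \<le> e" if "J \<le> i" "J \<le> j" for i j
    using that by (metis nle_le)
  then show ?thesis by blast
qed

lemma H_contraction_fixpoint:
  assumes F: "\<And>x. in_H x \<Longrightarrow> in_H (F x)"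
    and contraction: "\<And>x y. in_H x \<Longrightarrow> in_H y \<Longrightarrow>
                        H_norm (\<lambda>p. F x p - F y p) \<le> q * H_norm (\<lambda>p. x p - y p)"
    and q: "0 \<le> q" "q < 1"
  shows "\<exists>x. in_H x \<and> F x = x"
proof -
  define u where "u j = (F ^^ j) (\<lambda>_. 0)" for j
  have u_Suc: "u (Suc j) = F (u j)" for j
    by (simp add: u_def)
  have u: "in_H (u j)" for j
  proof (induction j)
    case (Suc j)
    then show ?case unfolding u_Suc by (rule F)
  qed (simp add: u_def in_H_zero)
  define C where "C = H_norm (\<lambda>p. u 1 p - u 0 p)"
  have increment: "H_norm (\<lambda>p. u (Suc j) p - u j p) \<le> C * q ^ j" for j
  proof (induction j)
    case (Suc j)
    have "H_norm (\<lambda>p. u (Suc (Suc j)) p - u (Suc j) p) \<le> q * H_norm (\<lambda>p. u (Suc j) p - u j p)"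
      using contraction[OF u[of "Suc j"] u[of j]] by (simp only: u_Suc)
    also have "\<dots> \<le> q * (C * q ^ j)" using Suc q by (intro mult_left_mono) auto
    finally show ?case by (simp add: algebra_simps)
  qed (simp add: C_def)
  have Cauchy: "\<exists>J. \<forall>i\<ge>J. \<forall>j\<ge>J. H_norm (\<lambda>p. u i p - u j p) \<le> e" if "e > 0" for e
    by (rule H_Cauchy_if_geometric[OF u increment q that])
  obtain x where conv: "H_conv u x"
    using H_complete[OF u Cauchy] by blast
  then have x: "in_H x" by (simp add: H_conv_def)
  have "H_conv (\<lambda>j. F (u j)) (F x)"
  proof (rule H_convI[OF F[OF x] F[OF u]])
    show "H_norm (\<lambda>p. F (u j) p - F x p) \<le> q * H_norm (\<lambda>p. u j p - x p)" for j
      by (rule contraction[OF u x])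
    show "(\<lambda>j. q * H_norm (\<lambda>p. u j p - x p)) \<longlonglongrightarrow> 0"
      using conv tendsto_mult_right_zero by (auto simp: H_conv_def)
  qed
  then have "(\<lambda>j. u (Suc j) p) \<longlonglongrightarrow> F x p" for p
    unfolding u_Suc by (rule H_conv_pointwise)
  moreover have "(\<lambda>j. u (Suc j) p) \<longlonglongrightarrow> x p" for p
    using H_conv_pointwise[OF conv] by (rule LIMSEQ_Suc)
  ultimately have "F x = x"
    using LIMSEQ_unique by blast
  then show ?thesis using x by blast
qed

section \<open>The weighted spaces H^{p,q}\<close>

lemma in_Hpq_summable:
  assumes "in_Hpq p q \<psi>"
    and "\<And>n m. 0 \<le> w n m" "\<And>n m. w n m \<le> C * (1 + real n ^ p + real m ^ q)"
  shows "(\<lambda>(n, m). w n m * (cmod (\<psi> (n, m)))\<^sup>2) summable_on UNIV"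
proof (rule summable_on_comparison_test)
  show "(\<lambda>(n, m). C * ((1 + real n ^ p + real m ^ q) * (cmod (\<psi> (n, m)))\<^sup>2)) summable_on UNIV"
    using summable_on_cmult_right[OF assms(1)[unfolded in_Hpq_def], of C]
    by (simp add: case_prod_unfold)
  fix nm :: "nat \<times> nat"
  obtain n m where nm: "nm = (n, m)" by fastforce
  show "(case nm of (n, m) \<Rightarrow> w n m * (cmod (\<psi> (n, m)))\<^sup>2)
      \<le> (case nm of (n, m) \<Rightarrow> C * ((1 + real n ^ p + real m ^ q) * (cmod (\<psi> (n, m)))\<^sup>2))"
    using mult_right_mono[OF assms(3)[of n m] zero_le_power2[of "cmod (\<psi> (n, m))"]]
    by (simp add: nm mult.assoc)
  show "0 \<le> (case nm of (n, m) \<Rightarrow> w n m * (cmod (\<psi> (n, m)))\<^sup>2)"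
    using assms(2)[of n m] by (simp add: nm)
qed

lemma in_Hpq_imp_in_H: "in_Hpq p q \<psi> \<Longrightarrow> in_H \<psi>"
  using in_Hpq_summable[of p q \<psi> "\<lambda>_ _. 1" 1] by (simp add: in_H_def case_prod_unfold)

lemma in_Hpq_imp_in_Hpq_0_1:
  assumes "1 \<le> q" "in_Hpq p q \<psi>" shows "in_Hpq 0 1 \<psi>"
proof -
  have "real m \<le> real m ^ q" for m
    using assms(1) by (cases "m = 0") (auto intro: self_le_power)
  then have "1 + real n ^ 0 + real m ^ 1 \<le> 2 * (1 + real n ^ p + real m ^ q)" for n m
    using zero_le_power[of "real n" p] by (smt (verit) of_nat_0_le_iff power_one_right power_0)
  then show ?thesis
    using in_Hpq_summable[OF assms(2), of "\<lambda>n m. 1 + real n ^ 0 + real m ^ 1" 2]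
    by (simp add: in_Hpq_def)
qed

lemma in_Hpq_finite_support: "finite {p. \<psi> p \<noteq> 0} \<Longrightarrow> in_Hpq p q \<psi>"
  unfolding in_Hpq_def
  by (rule summable_on_cong_neutral[THEN iffD1, rotated -1, OF summable_on_finite]) auto

definition number_b :: "state \<Rightarrow> real" where
  "number_b \<psi> = (\<Sum>\<^sub>\<infinity>p. real (snd p) * (cmod (\<psi> p))\<^sup>2)"

lemma number_b_nonneg: "number_b \<psi> \<ge> 0"
  unfolding number_b_def by (intro infsum_nonneg) simp

(* H^{0,1} is the preimage of H under multiplication by sqrt (1 + n^0 + m) = sqrt (2 + m). *)

definition b_weight :: "state \<Rightarrow> state" where
  "b_weight \<psi> = (\<lambda>p. of_real (sqrt (2 + real (snd p))) * \<psi> p)"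

lemma norm_b_weight_square: "(cmod (b_weight \<psi> p))\<^sup>2 = (2 + real (snd p)) * (cmod (\<psi> p))\<^sup>2"
  by (simp add: b_weight_def norm_mult power_mult_distrib)

lemma in_Hpq_0_1_iff: "in_Hpq 0 1 \<psi> \<longleftrightarrow> in_H (b_weight \<psi>)"
  by (simp add: in_Hpq_def in_H_def norm_b_weight_square case_prod_unfold add.assoc)

lemma b_weight_diff: "b_weight (\<lambda>p. a p - b p) = (\<lambda>p. b_weight a p - b_weight b p)"
  by (simp add: b_weight_def fun_eq_iff algebra_simps)

lemma b_weight_divide: "b_weight (\<lambda>p. z p / of_real (sqrt (2 + real (snd p)))) = z"
  by (simp add: b_weight_def fun_eq_iff add_pos_nonneg)

lemma b_weight_inject: "b_weight a = b_weight b \<Longrightarrow> a = b"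
  by (auto simp: b_weight_def fun_eq_iff add_pos_nonneg)

lemma H_sqnorm_b_weight:
  assumes "in_Hpq 0 1 \<psi>"
  shows "H_sqnorm (b_weight \<psi>) = 2 * H_sqnorm \<psi> + number_b \<psi>"
proof -
  have \<psi>: "(\<lambda>p. (cmod (\<psi> p))\<^sup>2) summable_on UNIV"
    using in_Hpq_imp_in_H[OF assms] by (simp add: in_H_def)
  have "(\<lambda>p. real (snd p) * (cmod (\<psi> p))\<^sup>2) summable_on UNIV"
    using in_Hpq_summable[OF assms, of "\<lambda>_ m. real m" 1] by (simp add: case_prod_unfold)
  then have "(\<Sum>\<^sub>\<infinity>p. 2 * (cmod (\<psi> p))\<^sup>2 + real (snd p) * (cmod (\<psi> p))\<^sup>2)
      = 2 * H_sqnorm \<psi> + number_b \<psi>"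
    using \<psi> by (simp add: infsum_add summable_on_cmult_right infsum_cmult_right'
                         H_sqnorm_def number_b_def)
  then show ?thesis
    by (simp add: H_sqnorm_def norm_b_weight_square algebra_simps)
qed

section \<open>Splitting G and its dissipativity on the core\<close>

lemma pochhammer_le_power: "pochhammer (real n + 1) j \<le> (real n + real j) ^ j"
proof -
  have "pochhammer (real n + 1) j = (\<Prod>i<j. real n + 1 + real i)"
    by (simp add: pochhammer_prod atLeast0LessThan)
  also have "\<dots> \<le> (\<Prod>i<j. real n + real j)"
    by (intro prod_mono) auto
  finally show ?thesis by simp
qed

lemma ann_a_pow:
  "(ann_a ^^ j) \<psi> (n, m) = of_real (sqrt (pochhammer (real n + 1) j)) * \<psi> (n + j, m)"
proof (induction j arbitrary: n)
  case (Suc j)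
  have "(ann_a ^^ Suc j) \<psi> (n, m) = of_real (sqrt (real n + 1)) * (ann_a ^^ j) \<psi> (n + 1, m)"
    by (simp add: ann_a_def add.commute)
  also have "\<dots> = of_real (sqrt (pochhammer (real n + 1) (Suc j))) * \<psi> (n + Suc j, m)"
    by (simp add: Suc pochhammer_rec real_sqrt_mult add_ac)
  finally show ?case .
qed simp

lemma cre_a_pow:
  "(cre_a ^^ j) \<psi> (n, m) =
     (if j \<le> n then of_real (sqrt (pochhammer (real (n - j) + 1) j)) * \<psi> (n - j, m) else 0)"
proof (induction j arbitrary: n)
  case (Suc j)
  have "(cre_a ^^ Suc j) \<psi> (n, m) =
      (if n = 0 then 0 else of_real (sqrt (real n)) * (cre_a ^^ j) \<psi> (n - 1, m))"
    by (simp add: cre_a_def)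
  also have "\<dots> = (if Suc j \<le> n
      then of_real (sqrt (pochhammer (real (n - Suc j) + 1) (Suc j))) * \<psi> (n - Suc j, m) else 0)"
  proof (cases "Suc j \<le> n")
    case True
    then have "real (n - Suc j) + 1 + real j = real n"
      by (simp add: of_nat_diff)
    then have "pochhammer (real (n - Suc j) + 1) (Suc j) = real n * pochhammer (real (n - Suc j) + 1) j"
      by (simp add: pochhammer_rec')
    moreover have "n - 1 - j = n - Suc j" by simp
    ultimately show ?thesis
      using True by (simp add: Suc real_sqrt_mult)
  qed (auto simp: Suc)
  finally show ?case .
qed simp

(* hop s c is the symmetric operator X + X^dagger, where X moves the coefficient at (n + s, m - 1)
   to (n, m) with the real weight c n m; for c n m = sqrt ((n+1)...(n+s) m) it is
   a^s b^dagger + (a^dagger)^s b. *)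

definition hop :: "nat \<Rightarrow> (nat \<Rightarrow> nat \<Rightarrow> real) \<Rightarrow> state \<Rightarrow> state" where
  "hop s c \<psi> = (\<lambda>(n, m). (if m = 0 then 0 else of_real (c n m) * \<psi> (n + s, m - 1))
                        + (if s \<le> n then of_real (c (n - s) (m + 1)) * \<psi> (n - s, m + 1) else 0))"

definition opA :: "nat \<Rightarrow> real \<Rightarrow> state \<Rightarrow> state" where
  "opA k \<kappa> \<psi> = (\<lambda>p. - \<i> * hop k (\<lambda>n m. sqrt (pochhammer (real n + 1) k * real m)) \<psi> p
                      - of_real (\<kappa> / 2 * real (snd p)) * \<psi> p)"

definition opB :: "nat \<Rightarrow> real \<Rightarrow> state \<Rightarrow> state" where
  "opB k \<alpha> \<psi> = (\<lambda>p. \<i> * of_real (\<alpha> ^ k) * hop 0 (\<lambda>_ m. sqrt (real m)) \<psi> p)"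

lemma opG_eq_opA_plus_opB: "opG k \<alpha> \<kappa> \<psi> = (\<lambda>p. opA k \<kappa> \<psi> p + opB k \<alpha> \<psi> p)"
proof
  fix p :: "nat \<times> nat"
  obtain n m where p: "p = (n, m)" by fastforce
  have "cre_b (ann_b \<psi>) (n, m) = of_real (real m) * \<psi> (n, m)"
    by (auto simp: cre_b_def ann_b_def simp flip: of_real_mult)
  then show "opG k \<alpha> \<kappa> \<psi> p = opA k \<kappa> \<psi> p + opB k \<alpha> \<psi> p"
    unfolding p opG_def opL_def opLdag_def ann_a_pow cre_a_pow
    by (simp add: opA_def opB_def hop_def cre_b_def ann_b_def real_sqrt_mult algebra_simps
        split: if_splits)
qed

lemma shift_reindex:
  fixes f :: "nat \<times> nat \<Rightarrow> 'b::{topological_comm_monoid_add, t2_space}"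
  shows "(\<lambda>(n, m). if s \<le> n then f (n - s, m + 1) else 0) summable_on UNIV
           \<longleftrightarrow> (\<lambda>(n, m). if m = 0 then 0 else f (n, m)) summable_on UNIV"
    and "(\<Sum>\<^sub>\<infinity>(n, m). if s \<le> n then f (n - s, m + 1) else 0)
           = (\<Sum>\<^sub>\<infinity>(n, m). if m = 0 then 0 else f (n, m))"
proof -
  let ?g = "\<lambda>(n, m). if s \<le> n then f (n - s, m + 1) else 0"
  let ?h = "\<lambda>(n, m). if m = 0 then 0 else f (n, m)"
  let ?A = "{p :: nat \<times> nat. s \<le> fst p}" and ?B = "{p :: nat \<times> nat. 1 \<le> snd p}"
  have bij: "bij_betw (\<lambda>(n, m). (n - s, m + 1)) ?A ?B"
    by (rule bij_betw_byWitness[of _ "\<lambda>p. (fst p + s, snd p - 1)"]) auto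
  have g: "?g p = ?h ((\<lambda>(n, m). (n - s, m + 1)) p)" if "p \<in> ?A" for p
    using that by (auto simp: case_prod_unfold)
  have "?g summable_on UNIV \<longleftrightarrow> ?g summable_on ?A"
    by (rule summable_on_cong_neutral) (auto simp: case_prod_unfold)
  also have "\<dots> \<longleftrightarrow> (\<lambda>p. ?h ((\<lambda>(n, m). (n - s, m + 1)) p)) summable_on ?A"
    by (rule summable_on_cong) (use g in auto)
  also have "\<dots> \<longleftrightarrow> ?h summable_on ?B"
    by (rule summable_on_reindex_bij_betw[OF bij])
  also have "\<dots> \<longleftrightarrow> ?h summable_on UNIV"
    by (rule summable_on_cong_neutral) (auto simp: case_prod_unfold)
  finally show "?g summable_on UNIV \<longleftrightarrow> ?h summable_on UNIV" .
  have "infsum ?g UNIV = infsum ?g ?A"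
    by (rule infsum_cong_neutral) (auto simp: case_prod_unfold)
  also have "\<dots> = infsum (\<lambda>p. ?h ((\<lambda>(n, m). (n - s, m + 1)) p)) ?A"
    by (rule infsum_cong) (use g in auto)
  also have "\<dots> = infsum ?h ?B"
    by (rule infsum_reindex_bij_betw[OF bij])
  also have "\<dots> = infsum ?h UNIV"
    by (rule infsum_cong_neutral) (auto simp: case_prod_unfold)
  finally show "infsum ?g UNIV = infsum ?h UNIV" .
qed

lemma hop_inner:
  assumes \<psi>: "in_H \<psi>"
    and w: "(\<lambda>(n, m). (if s \<le> n then (c (n - s) (m + 1))\<^sup>2 else 0) * (cmod (\<psi> (n, m)))\<^sup>2) summable_on UNIV"
  shows "(\<lambda>p. cnj (\<psi> p) * hop s c \<psi> p) summable_on UNIV"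
    and "Im (\<Sum>\<^sub>\<infinity>p. cnj (\<psi> p) * hop s c \<psi> p) = 0"
proof -
  define X where
    "X = (\<lambda>(n, m). if m = 0 then 0 else cnj (\<psi> (n, m)) * of_real (c n m) * \<psi> (n + s, m - 1))"
  define V where "V = (\<lambda>(n, m). if m = 0 then 0 else (c n m)\<^sup>2 * (cmod (\<psi> (n + s, m - 1)))\<^sup>2)"
  define f where "f p = (c (fst p) (snd p))\<^sup>2 * (cmod (\<psi> (fst p + s, snd p - 1)))\<^sup>2" for p
  have "(\<lambda>(n, m). if s \<le> n then f (n - s, m + 1) else 0)
      = (\<lambda>(n, m). (if s \<le> n then (c (n - s) (m + 1))\<^sup>2 else 0) * (cmod (\<psi> (n, m)))\<^sup>2)"
    by (auto simp: fun_eq_iff f_def)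
  moreover have "(\<lambda>(n, m). if m = 0 then 0 else f (n, m)) = V"
    by (auto simp: fun_eq_iff f_def V_def)
  ultimately have "V summable_on UNIV"
    using shift_reindex(1)[of s f] w by simp
  then have "(\<lambda>p. (cmod (\<psi> p))\<^sup>2 + V p) summable_on UNIV"
    using \<psi> by (intro summable_on_add) (auto simp: in_H_def)
  then have "(\<lambda>p. norm (X p)) summable_on UNIV"
  proof (rule summable_on_comparison_test)
    fix p :: "nat \<times> nat"
    obtain n m where p: "p = (n, m)" by fastforce
    have "cmod (\<psi> (n, m)) * (\<bar>c n m\<bar> * cmod (\<psi> (n + s, m - 1)))
        \<le> (cmod (\<psi> (n, m)))\<^sup>2 + (\<bar>c n m\<bar> * cmod (\<psi> (n + s, m - 1)))\<^sup>2"
      by (rule mult_le_sum_squares) simp_all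
    then show "norm (X p) \<le> (cmod (\<psi> p))\<^sup>2 + V p"
      by (simp add: p X_def V_def norm_mult power_mult_distrib mult.assoc)
  qed auto
  then have X: "X summable_on UNIV" by (rule abs_summable_summable)
  have hop_eq: "(\<lambda>p. cnj (\<psi> p) * hop s c \<psi> p)
      = (\<lambda>p. X p + (case p of (n, m) \<Rightarrow> if s \<le> n then cnj (X (n - s, m + 1)) else 0))"
    by (auto simp: fun_eq_iff hop_def X_def algebra_simps)
  have cnj_X: "(\<lambda>(n, m). if m = 0 then 0 else cnj (X (n, m))) = (\<lambda>p. cnj (X p))"
    by (auto simp: fun_eq_iff X_def)
  have Y: "(\<lambda>(n, m). if s \<le> n then cnj (X (n - s, m + 1)) else 0) summable_on UNIV"
    using shift_reindex(1)[of s "\<lambda>p. cnj (X p)"] X by (simp add: cnj_X)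
  show "(\<lambda>p. cnj (\<psi> p) * hop s c \<psi> p) summable_on UNIV"
    unfolding hop_eq by (intro summable_on_add X Y)
  have "(\<Sum>\<^sub>\<infinity>(n, m). if s \<le> n then cnj (X (n - s, m + 1)) else 0) = cnj (infsum X UNIV)"
    using shift_reindex(2)[of s "\<lambda>p. cnj (X p)"] by (simp add: cnj_X)
  then have "(\<Sum>\<^sub>\<infinity>p. cnj (\<psi> p) * hop s c \<psi> p) = infsum X UNIV + cnj (infsum X UNIV)"
    unfolding hop_eq by (simp add: infsum_add[OF X Y])
  then show "Im (\<Sum>\<^sub>\<infinity>p. cnj (\<psi> p) * hop s c \<psi> p) = 0" by simp
qed

lemma opA_weight_le:
  "(if k \<le> n then (sqrt (pochhammer (real (n - k) + 1) k * real (m + 1)))\<^sup>2 else 0)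
     \<le> 3 * (1 + real n ^ (2 * k) + real m ^ 2)"
proof (cases "k \<le> n")
  case True
  have "pochhammer (real (n - k) + 1) k \<le> real n ^ k"
    using pochhammer_le_power[of "n - k" k] True by (simp add: of_nat_diff)
  then have "pochhammer (real (n - k) + 1) k * real (m + 1) \<le> real n ^ k * real (m + 1)"
    by (rule mult_right_mono) simp
  also have "\<dots> \<le> (real n ^ k)\<^sup>2 + (real (m + 1))\<^sup>2"
    by (rule mult_le_sum_squares) simp_all
  also have "\<dots> \<le> 3 * (1 + real n ^ (2 * k) + real m ^ 2)"
  proof -
    have "(real n ^ k)\<^sup>2 = real n ^ (2 * k)" by (simp add: power_mult mult.commute)
    then show ?thesis
      using sum_squares_bound[of "real m" 1] by (simp add: power2_sum)
        (use zero_le_power[of "real n" "2 * k"] in linarith)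
  qed
  finally show ?thesis
    using True by (simp add: pochhammer_nonneg add_pos_nonneg)
qed simp

lemma inner_opA:
  assumes "in_Hpq (2 * k) 2 \<psi>"
  shows "(\<lambda>p. cnj (\<psi> p) * opA k \<kappa> \<psi> p) summable_on UNIV"
    and "Re (\<Sum>\<^sub>\<infinity>p. cnj (\<psi> p) * opA k \<kappa> \<psi> p) = - (\<kappa> / 2) * number_b \<psi>"
proof -
  let ?c = "\<lambda>n m. sqrt (pochhammer (real n + 1) k * real m)"
  let ?H = "\<lambda>p. cnj (\<psi> p) * hop k ?c \<psi> p"
  let ?N = "\<lambda>p. real (snd p) * (cmod (\<psi> p))\<^sup>2"
  have \<psi>: "in_H \<psi>" by (rule in_Hpq_imp_in_H[OF assms])
  have "(\<lambda>(n, m). (if k \<le> n then (?c (n - k) (m + 1))\<^sup>2 else 0) * (cmod (\<psi> (n, m)))\<^sup>2) summable_on UNIV"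
    by (rule in_Hpq_summable[OF assms _ opA_weight_le]) simp
  note H = hop_inner[OF \<psi> this]
  have "in_Hpq 0 1 \<psi>" by (rule in_Hpq_imp_in_Hpq_0_1[OF _ assms]) simp
  then have N: "?N summable_on UNIV"
    using in_Hpq_summable[of 0 1 \<psi> "\<lambda>_ m. real m" 1] by (simp add: case_prod_unfold)
  have eq: "(\<lambda>p. cnj (\<psi> p) * opA k \<kappa> \<psi> p) = (\<lambda>p. - \<i> * ?H p - of_real (\<kappa> / 2 * ?N p))"
  proof
    fix p
    have "cnj (\<psi> p) * (of_real (\<kappa> / 2 * real (snd p)) * \<psi> p) = of_real (\<kappa> / 2 * ?N p)"
      using cnj_mult_self[of "\<psi> p"] by (simp add: algebra_simps)
    then show "cnj (\<psi> p) * opA k \<kappa> \<psi> p = - \<i> * ?H p - of_real (\<kappa> / 2 * ?N p)"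
      by (simp add: opA_def right_diff_distrib)
  qed
  show "(\<lambda>p. cnj (\<psi> p) * opA k \<kappa> \<psi> p) summable_on UNIV"
    unfolding eq
    by (intro summable_on_diff summable_on_cmult_right summable_on_of_real H(1) N)
  have "(\<Sum>\<^sub>\<infinity>p. cnj (\<psi> p) * opA k \<kappa> \<psi> p)
      = (\<Sum>\<^sub>\<infinity>p. - \<i> * ?H p) - (\<Sum>\<^sub>\<infinity>p. of_real (\<kappa> / 2 * ?N p))"
    unfolding eq
    by (rule infsum_diff[OF summable_on_cmult_right[OF H(1)]
                            summable_on_of_real[OF summable_on_cmult_right[OF N]]])
  also have "(\<Sum>\<^sub>\<infinity>p. of_real (\<kappa> / 2 * ?N p)) = (of_real (\<kappa> / 2 * number_b \<psi>) :: complex)"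
    unfolding infsum_of_real[OF summable_on_cmult_right[OF N]] infsum_cmult_right' number_b_def ..
  also have "(\<Sum>\<^sub>\<infinity>p. - \<i> * ?H p) = - \<i> * infsum ?H UNIV"
    by (rule infsum_cmult_right')
  finally have "(\<Sum>\<^sub>\<infinity>p. cnj (\<psi> p) * opA k \<kappa> \<psi> p)
      = - \<i> * infsum ?H UNIV - of_real (\<kappa> / 2 * number_b \<psi>)" .
  then show "Re (\<Sum>\<^sub>\<infinity>p. cnj (\<psi> p) * opA k \<kappa> \<psi> p) = - (\<kappa> / 2) * number_b \<psi>"
    using H(2) by simp
qed

lemma inner_opB:
  assumes "in_Hpq 0 1 \<psi>"
  shows "(\<lambda>p. cnj (\<psi> p) * opB k \<alpha> \<psi> p) summable_on UNIV"
    and "Re (\<Sum>\<^sub>\<infinity>p. cnj (\<psi> p) * opB k \<alpha> \<psi> p) = 0"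
proof -
  have "(\<lambda>(n, m). (if 0 \<le> n then (sqrt (real (m + 1)))\<^sup>2 else 0) * (cmod (\<psi> (n, m)))\<^sup>2) summable_on UNIV"
    using in_Hpq_summable[OF assms, of "\<lambda>(n::nat) m. if 0 \<le> n then (sqrt (real (m + 1)))\<^sup>2 else 0" 1]
    by simp
  note H = hop_inner[OF in_Hpq_imp_in_H[OF assms] this]
  have eq: "(\<lambda>p. cnj (\<psi> p) * opB k \<alpha> \<psi> p)
      = (\<lambda>p. \<i> * of_real (\<alpha> ^ k) * (cnj (\<psi> p) * hop 0 (\<lambda>_ m. sqrt (real m)) \<psi> p))"
    by (simp add: fun_eq_iff opB_def)
  show "(\<lambda>p. cnj (\<psi> p) * opB k \<alpha> \<psi> p) summable_on UNIV"
    unfolding eq by (intro summable_on_cmult_right H(1))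
  show "Re (\<Sum>\<^sub>\<infinity>p. cnj (\<psi> p) * opB k \<alpha> \<psi> p) = 0"
    unfolding eq infsum_cmult_right' using H(2) by simp
qed

lemma Re_inner_opG:
  assumes "in_Hpq (2 * k) 2 \<psi>"
  shows "Re (H_inner \<psi> (opG k \<alpha> \<kappa> \<psi>)) = - (\<kappa> / 2) * number_b \<psi>"
proof -
  note A = inner_opA[OF assms, of \<kappa>]
  have "in_Hpq 0 1 \<psi>" by (rule in_Hpq_imp_in_Hpq_0_1[OF _ assms]) simp
  note B = inner_opB[OF this, of k \<alpha>]
  have "H_inner \<psi> (opG k \<alpha> \<kappa> \<psi>)
      = (\<Sum>\<^sub>\<infinity>p. cnj (\<psi> p) * opA k \<kappa> \<psi> p) + (\<Sum>\<^sub>\<infinity>p. cnj (\<psi> p) * opB k \<alpha> \<psi> p)"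
    unfolding H_inner_def opG_eq_opA_plus_opB distrib_left
    by (rule infsum_add[OF A(1) B(1)])
  then show ?thesis using A(2) B(2) by simp
qed

lemma summable_shifted_number_b:
  assumes "in_Hpq 0 1 \<psi>"
  defines "f1 \<equiv> \<lambda>(n, m). if m = 0 then 0 else real m * (cmod (\<psi> (n, m - 1)))\<^sup>2"
    and "f2 \<equiv> \<lambda>(n, m). real (m + 1) * (cmod (\<psi> (n, m + 1)))\<^sup>2"
  shows "f1 summable_on UNIV \<and> infsum f1 UNIV \<le> H_sqnorm (b_weight \<psi>)"
    and "f2 summable_on UNIV \<and> infsum f2 UNIV \<le> H_sqnorm (b_weight \<psi>)"
proof -
  let ?Q = "\<lambda>p. (cmod (b_weight \<psi> p))\<^sup>2"
  have Q: "?Q summable_on UNIV"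
    using assms(1) unfolding in_Hpq_0_1_iff in_H_def .
  show "f1 summable_on UNIV \<and> infsum f1 UNIV \<le> H_sqnorm (b_weight \<psi>)"
  proof -
    define f where "f p = real (snd p) * (cmod (\<psi> (fst p, snd p - 1)))\<^sup>2" for p
    have g: "(\<lambda>(n, m). if 0 \<le> n then f (n - 0, m + 1) else 0) = (\<lambda>p. (1 + real (snd p)) * (cmod (\<psi> p))\<^sup>2)"
      by (auto simp: fun_eq_iff f_def)
    have h: "(\<lambda>(n, m). if m = 0 then 0 else f (n, m)) = f1"
      by (auto simp: fun_eq_iff f_def f1_def)
    have le: "(1 + real (snd p)) * (cmod (\<psi> p))\<^sup>2 \<le> ?Q p" for p
      by (simp add: norm_b_weight_square mult_right_mono)
    have "(\<lambda>p. (1 + real (snd p)) * (cmod (\<psi> p))\<^sup>2) summable_on UNIV"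
      by (rule summable_on_comparison_test[OF Q]) (use le in auto)
    moreover from this have "(\<Sum>\<^sub>\<infinity>p. (1 + real (snd p)) * (cmod (\<psi> p))\<^sup>2) \<le> infsum ?Q UNIV"
      by (rule infsum_mono[OF _ Q le])
    ultimately show ?thesis
      using shift_reindex[of 0 f] unfolding g h by (simp add: H_sqnorm_def)
  qed
  show "f2 summable_on UNIV \<and> infsum f2 UNIV \<le> H_sqnorm (b_weight \<psi>)"
  proof -
    define f where "f p = real (snd p) * (cmod (\<psi> p))\<^sup>2" for p
    have g: "(\<lambda>(n, m). if 0 \<le> n then f (n - 0, m + 1) else 0) = f2"
      by (auto simp: fun_eq_iff f_def f2_def)
    have h: "(\<lambda>(n, m). if m = 0 then 0 else f (n, m)) = f"
      by (auto simp: fun_eq_iff f_def)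
    have le: "f p \<le> ?Q p" for p
      by (simp add: f_def norm_b_weight_square mult_right_mono)
    have "f summable_on UNIV"
      by (rule summable_on_comparison_test[OF Q]) (use le in \<open>auto simp: f_def\<close>)
    moreover from this have "infsum f UNIV \<le> infsum ?Q UNIV"
      by (rule infsum_mono[OF _ Q le])
    ultimately show ?thesis
      using shift_reindex[of 0 f] unfolding g h by (simp add: H_sqnorm_def)
  qed
qed

lemma hop_0_bound:
  assumes "in_Hpq 0 1 \<psi>"
  shows "in_H (hop 0 (\<lambda>_ m. sqrt (real m)) \<psi>)"
    and "H_sqnorm (hop 0 (\<lambda>_ m. sqrt (real m)) \<psi>) \<le> 4 * H_sqnorm (b_weight \<psi>)"
proof -
  let ?h = "hop 0 (\<lambda>_ m. sqrt (real m)) \<psi>"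
  define f1 where "f1 = (\<lambda>(n, m). if m = 0 then 0 else real m * (cmod (\<psi> (n, m - 1)))\<^sup>2)"
  define f2 where "f2 = (\<lambda>(n, m). real (m + 1) * (cmod (\<psi> (n, m + 1)))\<^sup>2)"
  note f1 = summable_shifted_number_b(1)[OF assms, folded f1_def]
  note f2 = summable_shifted_number_b(2)[OF assms, folded f2_def]
  have pointwise: "(cmod (?h p))\<^sup>2 \<le> 2 * f1 p + 2 * f2 p" for p
  proof -
    obtain n m where p: "p = (n, m)" by fastforce
    let ?X = "if m = 0 then 0 else of_real (sqrt (real m)) * \<psi> (n, m - 1)"
    let ?Y = "of_real (sqrt (real (m + 1))) * \<psi> (n, m + 1)"
    have "?h p = ?X + ?Y" by (simp add: p hop_def)
    moreover have "(cmod ?X)\<^sup>2 = f1 p" "(cmod ?Y)\<^sup>2 = f2 p"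
      by (simp_all add: p f1_def f2_def norm_mult power_mult_distrib)
    ultimately show ?thesis
      using norm_add_square_le[of ?X ?Y] by simp
  qed
  have sum: "(\<lambda>p. 2 * f1 p + 2 * f2 p) summable_on UNIV"
    using f1 f2 by (intro summable_on_add summable_on_cmult_right) auto
  show h: "in_H ?h"
    unfolding in_H_def by (rule summable_on_comparison_test[OF sum]) (use pointwise in auto)
  have "H_sqnorm ?h \<le> (\<Sum>\<^sub>\<infinity>p. 2 * f1 p + 2 * f2 p)"
    unfolding H_sqnorm_def using h pointwise by (intro infsum_mono[OF _ sum]) (auto simp: in_H_def)
  also have "\<dots> = 2 * infsum f1 UNIV + 2 * infsum f2 UNIV"
    using f1 f2 by (simp add: infsum_add summable_on_cmult_right infsum_cmult_right')
  also have "\<dots> \<le> 4 * H_sqnorm (b_weight \<psi>)"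
    using f1 f2 by simp
  finally show "H_sqnorm ?h \<le> 4 * H_sqnorm (b_weight \<psi>)" .
qed

lemma opB_bound:
  assumes "in_Hpq 0 1 \<psi>"
  shows "in_H (opB k \<alpha> \<psi>)" and "H_sqnorm (opB k \<alpha> \<psi>) \<le> 4 * (\<alpha> ^ k)\<^sup>2 * H_sqnorm (b_weight \<psi>)"
proof -
  define c where "c = \<i> * of_real (\<alpha> ^ k)"
  have opB: "opB k \<alpha> \<psi> = (\<lambda>p. c * hop 0 (\<lambda>_ m. sqrt (real m)) \<psi> p)"
    by (simp add: opB_def c_def fun_eq_iff)
  have c: "(cmod c)\<^sup>2 = (\<alpha> ^ k)\<^sup>2"
    by (simp add: c_def norm_mult del: of_real_power)
  show "in_H (opB k \<alpha> \<psi>)"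
    unfolding opB by (rule in_H_cmult[OF hop_0_bound(1)[OF assms]])
  show "H_sqnorm (opB k \<alpha> \<psi>) \<le> 4 * (\<alpha> ^ k)\<^sup>2 * H_sqnorm (b_weight \<psi>)"
    unfolding opB H_sqnorm_cmult c
    using mult_left_mono[OF hop_0_bound(2)[OF assms], of "(\<alpha> ^ k)\<^sup>2"] by simp
qed

lemma H_norm_opB_le:
  assumes "in_Hpq 0 1 \<psi>"
  shows "H_norm (opB k \<alpha> \<psi>) \<le> 2 * \<bar>\<alpha> ^ k\<bar> * H_norm (b_weight \<psi>)"
proof -
  have "H_norm (opB k \<alpha> \<psi>) \<le> sqrt (4 * (\<alpha> ^ k)\<^sup>2 * H_sqnorm (b_weight \<psi>))"
    unfolding H_norm_eq_sqrt by (rule real_sqrt_le_mono[OF opB_bound(2)[OF assms]])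
  also have "\<dots> = 2 * \<bar>\<alpha> ^ k\<bar> * H_norm (b_weight \<psi>)"
    by (simp add: H_norm_eq_sqrt real_sqrt_mult)
  finally show ?thesis .
qed

section \<open>The closure of G\<close>

lemma opG_tendsto:
  assumes "\<And>p. (\<lambda>j. s j p) \<longlonglongrightarrow> x p"
  shows "(\<lambda>j. opG k \<alpha> \<kappa> (s j) p) \<longlonglongrightarrow> opG k \<alpha> \<kappa> x p"
proof -
  obtain n m where p: "p = (n, m)" by fastforce
  show ?thesis
    unfolding opG_eq_opA_plus_opB opA_def opB_def hop_def p
    by (cases "m = 0"; cases "k \<le> n"; simp; (intro tendsto_intros assms; simp))
qed

lemma closure_graph_opG:
  assumes "(x, y) \<in> closure_graph D (opG k \<alpha> \<kappa>)"
  shows "y = opG k \<alpha> \<kappa> x"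
proof
  fix p
  from assms obtain s where s: "H_conv s x" "H_conv (\<lambda>j. opG k \<alpha> \<kappa> (s j)) y"
    by (auto simp: closure_graph_def)
  have "(\<lambda>j. opG k \<alpha> \<kappa> (s j) p) \<longlonglongrightarrow> opG k \<alpha> \<kappa> x p"
    by (rule opG_tendsto[OF H_conv_pointwise[OF s(1)]])
  moreover have "(\<lambda>j. opG k \<alpha> \<kappa> (s j) p) \<longlonglongrightarrow> y p"
    by (rule H_conv_pointwise[OF s(2)])
  ultimately show "y p = opG k \<alpha> \<kappa> x p"
    using LIMSEQ_unique by blast
qed

lemma closable_opG: "closable D (opG k \<alpha> \<kappa>)"
proof -
  have "opG k \<alpha> \<kappa> (\<lambda>_. 0) = (\<lambda>_. 0)"
    by (simp add: fun_eq_iff opG_eq_opA_plus_opB opA_def opB_def hop_def case_prod_unfold)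
  then show ?thesis
    unfolding closable_def using closure_graph_opG[of "\<lambda>_. 0" _ D k \<alpha> \<kappa>] by simp
qed

lemma closure_op_opG:
  assumes "x \<in> closure_dom D (opG k \<alpha> \<kappa>)"
  shows "closure_op D (opG k \<alpha> \<kappa>) x = opG k \<alpha> \<kappa> x"
    and "(x, opG k \<alpha> \<kappa> x) \<in> closure_graph D (opG k \<alpha> \<kappa>)"
proof -
  from assms obtain y where y: "(x, y) \<in> closure_graph D (opG k \<alpha> \<kappa>)"
    by (auto simp: closure_dom_def)
  then show graph: "(x, opG k \<alpha> \<kappa> x) \<in> closure_graph D (opG k \<alpha> \<kappa>)"
    using closure_graph_opG[OF y] by simp
  show "closure_op D (opG k \<alpha> \<kappa>) x = opG k \<alpha> \<kappa> x"
    unfolding closure_op_def using graph closure_graph_opG by blast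
qed

lemma H_conv_in_Hpq_0_1:
  assumes sx: "H_conv s x" and s01: "\<And>j. in_Hpq 0 1 (s j)" and B: "\<And>j. number_b (s j) \<le> B"
  shows "in_Hpq 0 1 x"
proof -
  obtain C where C: "\<And>j. H_norm (s j) \<le> C"
    using H_conv_bounded[OF sx] by blast
  have "in_H (b_weight (s j)) \<and> H_sqnorm (b_weight (s j)) \<le> 2 * C\<^sup>2 + B" for j
  proof
    show "in_H (b_weight (s j))"
      using s01 unfolding in_Hpq_0_1_iff .
    have "H_sqnorm (s j) \<le> C\<^sup>2"
      using C[of j] H_norm_nonneg[of "s j"] by (simp flip: H_norm_square add: power_mono)
    then show "H_sqnorm (b_weight (s j)) \<le> 2 * C\<^sup>2 + B"
      using H_sqnorm_b_weight[OF s01] B[of j] by simp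
  qed
  then have bounded: "eventually (\<lambda>j. in_H (b_weight (s j)) \<and> H_sqnorm (b_weight (s j)) \<le> 2 * C\<^sup>2 + B) sequentially"
    by simp
  have "(\<lambda>j. b_weight (s j) p) \<longlonglongrightarrow> b_weight x p" for p
    unfolding b_weight_def by (intro tendsto_intros H_conv_pointwise[OF sx])
  then have "in_H (b_weight x)"
    using bounded by (rule pointwise_limit_in_H(1))
  then show ?thesis unfolding in_Hpq_0_1_iff .
qed

lemma closure_dom_opG:
  assumes \<kappa>: "\<kappa> > 0"
    and x: "x \<in> closure_dom {\<psi>. in_Hpq (2 * k) 2 \<psi>} (opG k \<alpha> \<kappa>)"
  shows "in_Hpq 0 1 x" "in_H (opG k \<alpha> \<kappa> x)" "Re (H_inner x (opG k \<alpha> \<kappa> x)) \<le> 0"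
proof -
  from closure_op_opG(2)[OF x] obtain s where
    sD: "\<And>j. in_Hpq (2 * k) 2 (s j)" and sx: "H_conv s x"
    and sy: "H_conv (\<lambda>j. opG k \<alpha> \<kappa> (s j)) (opG k \<alpha> \<kappa> x)"
    by (auto simp: closure_graph_def)
  show "in_H (opG k \<alpha> \<kappa> x)" using sy by (simp add: H_conv_def)
  have "(\<lambda>j. Re (H_inner (s j) (opG k \<alpha> \<kappa> (s j)))) \<longlonglongrightarrow> Re (H_inner x (opG k \<alpha> \<kappa> x))"
    by (intro tendsto_intros H_inner_tendsto sx sy)
  then have lim: "(\<lambda>j. - (\<kappa> / 2) * number_b (s j)) \<longlonglongrightarrow> Re (H_inner x (opG k \<alpha> \<kappa> x))"
    by (simp add: Re_inner_opG[OF sD])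
  show "Re (H_inner x (opG k \<alpha> \<kappa> x)) \<le> 0"
    using \<kappa> number_b_nonneg by (intro tendsto_upperbound[OF lim]) (auto simp: mult_nonneg_nonneg)
  have "(\<lambda>j. (- 2 / \<kappa>) * (- (\<kappa> / 2) * number_b (s j))) \<longlonglongrightarrow> (- 2 / \<kappa>) * Re (H_inner x (opG k \<alpha> \<kappa> x))"
    by (intro tendsto_intros lim)
  then have "Bseq (\<lambda>j. number_b (s j))"
    using \<kappa> by (intro convergent_imp_Bseq convergentI) simp
  then obtain B where B: "\<And>j. norm (number_b (s j)) \<le> B"
    by (auto simp: Bseq_def)
  show "in_Hpq 0 1 x"
  proof (rule H_conv_in_Hpq_0_1[OF sx])
    show "in_Hpq 0 1 (s j)" for j
      by (rule in_Hpq_imp_in_Hpq_0_1[OF _ sD]) simp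
    show "number_b (s j) \<le> B" for j
      using abs_le_D1[OF B[of j, unfolded real_norm_def]] .
  qed
qed

section \<open>Solving (A - lambda) x = w block by block\<close>

(* opA conserves n + k m, the excitation number of a^k b^dagger + (a^dagger)^k b. *)

definition level :: "nat \<Rightarrow> nat \<times> nat \<Rightarrow> nat" where
  "level k p = fst p + k * snd p"

lemma finite_level_le:
  assumes "1 \<le> k" shows "finite {p. level k p \<le> N}"
proof (rule finite_subset)
  show "{p. level k p \<le> N} \<subseteq> {0..N} \<times> {0..N}"
  proof safe
    fix n m assume "level k (n, m) \<le> N"
    then have "n + k * m \<le> N" by (simp add: level_def)
    moreover have "m \<le> k * m" using assms by simp
    ultimately have "n \<le> N" "m \<le> N" by linarith+
    then show "n \<in> {0..N}" "m \<in> {0..N}" by simp_all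
  qed
qed simp

lemma in_Hpq_level_truncation:
  "1 \<le> k \<Longrightarrow> in_Hpq p q (\<lambda>x. if level k x \<le> N then \<psi> x else 0)"
  by (rule in_Hpq_finite_support, rule finite_subset[OF _ finite_level_le[of k N]]) auto

lemma opA_local:
  assumes "\<And>q. level k q = level k p \<Longrightarrow> \<psi> q = \<phi> q"
  shows "opA k \<kappa> \<psi> p = opA k \<kappa> \<phi> p"
proof -
  obtain n m where p: "p = (n, m)" by fastforce
  have "\<psi> (n, m) = \<phi> (n, m)"
    using assms p by simp
  moreover have "\<psi> (n + k, m - 1) = \<phi> (n + k, m - 1)" if "m \<noteq> 0"
    using that by (intro assms) (cases m; simp add: level_def p algebra_simps)
  moreover have "\<psi> (n - k, m + 1) = \<phi> (n - k, m + 1)" if "k \<le> n"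
    using that by (intro assms) (simp add: level_def p algebra_simps)
  ultimately show ?thesis
    by (simp add: p opA_def hop_def)
qed

lemma opA_restrict:
  "opA k \<kappa> (\<lambda>p. if P (level k p) then \<psi> p else 0) = (\<lambda>p. if P (level k p) then opA k \<kappa> \<psi> p else 0)"
proof
  fix p
  show "opA k \<kappa> (\<lambda>p. if P (level k p) then \<psi> p else 0) p = (if P (level k p) then opA k \<kappa> \<psi> p else 0)"
  proof (cases "P (level k p)")
    case True
    then have "opA k \<kappa> (\<lambda>p. if P (level k p) then \<psi> p else 0) p = opA k \<kappa> \<psi> p"
      by (intro opA_local) simp
    with True show ?thesis by simp
  next
    case False
    then have "opA k \<kappa> (\<lambda>p. if P (level k p) then \<psi> p else 0) p = opA k \<kappa> (\<lambda>_. 0) p"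
      by (intro opA_local) simp
    with False show ?thesis by (simp add: opA_def hop_def case_prod_unfold)
  qed
qed

lemma opA_add: "opA k \<kappa> (\<lambda>p. \<psi> p + \<phi> p) = (\<lambda>p. opA k \<kappa> \<psi> p + opA k \<kappa> \<phi> p)"
  by (simp add: opA_def hop_def fun_eq_iff case_prod_unfold algebra_simps del: of_real_mult of_real_divide)

lemma opA_cmult: "opA k \<kappa> (\<lambda>p. c * \<psi> p) = (\<lambda>p. c * opA k \<kappa> \<psi> p)"
  by (simp add: opA_def hop_def fun_eq_iff case_prod_unfold algebra_simps del: of_real_mult of_real_divide)

lemma opA_diff: "opA k \<kappa> (\<lambda>p. \<psi> p - \<phi> p) = (\<lambda>p. opA k \<kappa> \<psi> p - opA k \<kappa> \<phi> p)"
  by (simp add: opA_def hop_def fun_eq_iff case_prod_unfold algebra_simps del: of_real_mult of_real_divide)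

lemma opB_diff: "opB k \<alpha> (\<lambda>p. \<psi> p - \<phi> p) = (\<lambda>p. opB k \<alpha> \<psi> p - opB k \<alpha> \<phi> p)"
  by (simp add: opB_def hop_def fun_eq_iff case_prod_unfold algebra_simps)

lemma (in vector_space) linear_inj_on_span_imp_surj:
  assumes lin: "Vector_Spaces.linear scale scale T"
    and B: "finite B" "independent B"
    and inj: "inj_on T (span B)" and maps: "T ` B \<subseteq> span B"
  shows "span B \<subseteq> T ` span B"
proof -
  interpret L: Vector_Spaces.linear scale scale T by (rule lin)
  have TB: "independent (T ` B)"
    by (rule L.independent_injective_image[OF B(2) inj])
  have card_TB: "card (T ` B) = card B"
    using inj span_superset by (intro card_image) (rule inj_on_subset)
  have "span B \<subseteq> span (T ` B)"
  proof
    fix y assume y: "y \<in> span B"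
    show "y \<in> span (T ` B)"
    proof (rule ccontr)
      assume "y \<notin> span (T ` B)"
      then have "independent (insert y (T ` B))" "y \<notin> T ` B"
        using independent_insertI[OF _ TB] span_base by blast+
      moreover have "insert y (T ` B) \<subseteq> span B"
        using y maps by auto
      ultimately have "card (insert y (T ` B)) \<le> card B"
        using independent_span_bound[OF B(1)] by blast
      then show False
        using \<open>y \<notin> T ` B\<close> B(1) card_TB by simp
    qed
  qed
  then show ?thesis
    using L.span_image[of B] by simp
qed

lemma finite_support_inj_imp_surj:
  fixes T :: "('a \<Rightarrow> 'k::field) \<Rightarrow> 'a \<Rightarrow> 'k"
  assumes S: "finite S"
    and add: "\<And>f g. T (\<lambda>x. f x + g x) = (\<lambda>x. T f x + T g x)"
    and cmult: "\<And>c f. T (\<lambda>x. c * f x) = (\<lambda>x. c * T f x)"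
    and maps: "\<And>f. {x. f x \<noteq> 0} \<subseteq> S \<Longrightarrow> {x. T f x \<noteq> 0} \<subseteq> S"
    and inj: "\<And>f. {x. f x \<noteq> 0} \<subseteq> S \<Longrightarrow> T f = (\<lambda>_. 0) \<Longrightarrow> f = (\<lambda>_. 0)"
    and g: "{x. g x \<noteq> 0} \<subseteq> S"
  shows "\<exists>f. {x. f x \<noteq> 0} \<subseteq> S \<and> T f = g"
proof -
  let ?scale = "\<lambda>c (f :: 'a \<Rightarrow> 'k) x. c * f x"
  interpret VS: vector_space ?scale
    by unfold_locales (simp_all add: fun_eq_iff algebra_simps)
  have lin: "Vector_Spaces.linear ?scale ?scale T"
    by unfold_locales (simp_all add: plus_fun_def add cmult)
  interpret L: Vector_Spaces.linear ?scale ?scale T by (rule lin)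
  let ?V = "{f. {x. f x \<noteq> 0} \<subseteq> S}"
  have V: "VS.subspace ?V"
    unfolding VS.subspace_def by (auto simp: zero_fun_def subset_iff) (metis add.right_neutral)
  let ?E = "(\<lambda>a x. if x = a then 1 else 0) ` S"
  have "?V \<subseteq> VS.span ?E"
  proof
    fix f :: "'a \<Rightarrow> 'k" assume "f \<in> ?V"
    have "f = (\<Sum>a\<in>S. ?scale (f a) (\<lambda>x. if x = a then 1 else 0))"
    proof
      fix x
      have "(\<Sum>a\<in>S. ?scale (f a) (\<lambda>x. if x = a then 1 else 0)) x = (\<Sum>a\<in>S. if x = a then f a else 0)"
        using S by (induction S rule: finite_induct) auto
      also have "\<dots> = f x"
        using S \<open>f \<in> ?V\<close> by (cases "x \<in> S") auto
      finally show "f x = (\<Sum>a\<in>S. ?scale (f a) (\<lambda>x. if x = a then 1 else 0)) x" ..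
    qed
    also have "\<dots> \<in> VS.span ?E"
      by (intro VS.span_sum VS.span_scale VS.span_base) auto
    finally show "f \<in> VS.span ?E" .
  qed
  obtain B where B: "B \<subseteq> ?V" "VS.independent B" "?V \<subseteq> VS.span B"
    using VS.basis_exists by metis
  have "finite B"
    using VS.independent_span_bound[OF finite_imageI[OF S] B(2)] B(1) \<open>?V \<subseteq> VS.span ?E\<close> by blast
  have span_B: "VS.span B = ?V"
    by (rule VS.span_subspace[OF B(1) B(3) V])
  have inj_on: "inj_on T ?V"
    unfolding L.inj_on_iff_eq_0[OF V] using inj by (auto simp: zero_fun_def)
  have "T ` B \<subseteq> VS.span B"
    using maps B(1) span_B by auto
  then have "?V \<subseteq> T ` ?V"
    using VS.linear_inj_on_span_imp_surj[OF lin \<open>finite B\<close> B(2)] inj_on span_B by simp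
  then show ?thesis using g by blast
qed

lemma coercive_bound:
  fixes a b l M \<kappa> :: real
  assumes l: "1 \<le> l" and \<kappa>: "0 < \<kappa>" and a: "0 \<le> a" and M: "0 \<le> M"
    and ineq: "l * a\<^sup>2 + \<kappa> / 2 * M \<le> a * b"
  shows "2 * a\<^sup>2 + M \<le> (2 + 1 / \<kappa>) / l * b\<^sup>2"
proof -
  have "0 \<le> (2 * l * a - b)\<^sup>2" by simp
  then have "4 * l * (a * b - l * a\<^sup>2) \<le> b\<^sup>2"
    by (simp add: power2_diff power2_eq_square algebra_simps)
  moreover have "4 * l * (l * a\<^sup>2 + \<kappa> / 2 * M) \<le> 4 * l * (a * b)"
    using mult_left_mono[OF ineq, of "4 * l"] l by simp
  moreover have "0 \<le> l * \<kappa> * M"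
    using l \<kappa> M by simp
  ultimately have bM: "l * \<kappa> * M \<le> b\<^sup>2"
    by (simp add: algebra_simps)
  have "0 \<le> \<kappa> / 2 * M" using \<kappa> M by simp
  then have "l * a\<^sup>2 \<le> a * b" using ineq by linarith
  have la_b: "(l * a)\<^sup>2 \<le> b\<^sup>2"
  proof (cases "a = 0")
    case False
    with \<open>l * a\<^sup>2 \<le> a * b\<close> a have "l * a \<le> b"
      by (simp add: power2_eq_square mult.assoc mult_le_cancel_left_pos)
    then show ?thesis using l a by (intro power_mono) auto
  qed simp
  have "l * a\<^sup>2 \<le> l * (l * a\<^sup>2)"
    using mult_right_mono[of 1 l "l * a\<^sup>2"] l by simp
  also have "\<dots> = (l * a)\<^sup>2"
    by (simp add: power2_eq_square algebra_simps)
  finally have "l * a\<^sup>2 \<le> b\<^sup>2"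
    using la_b by linarith
  then have "\<kappa> * (l * a\<^sup>2) \<le> \<kappa> * b\<^sup>2"
    using \<kappa> by (intro mult_left_mono) auto
  with bM have "l * \<kappa> * (2 * a\<^sup>2 + M) \<le> (2 * \<kappa> + 1) * b\<^sup>2"
    by (simp add: algebra_simps)
  then have "2 * a\<^sup>2 + M \<le> (2 * \<kappa> + 1) * b\<^sup>2 / (l * \<kappa>)"
    using l \<kappa> by (simp add: pos_le_divide_eq mult.commute)
  also have "\<dots> = (2 + 1 / \<kappa>) / l * b\<^sup>2"
    using \<kappa> by (simp add: field_simps)
  finally show ?thesis .
qed

lemma opA_coercive:
  assumes \<psi>: "in_Hpq (2 * k) 2 \<psi>"
    and w: "in_H (\<lambda>p. opA k \<kappa> \<psi> p - of_real l * \<psi> p)"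
  shows "l * H_sqnorm \<psi> + \<kappa> / 2 * number_b \<psi> \<le> H_norm \<psi> * H_norm (\<lambda>p. opA k \<kappa> \<psi> p - of_real l * \<psi> p)"
proof -
  let ?w = "\<lambda>p. opA k \<kappa> \<psi> p - of_real l * \<psi> p"
  have \<psi>H: "in_H \<psi>" by (rule in_Hpq_imp_in_H[OF \<psi>])
  note A = inner_opA[OF \<psi>, of \<kappa>]
  have self: "(\<lambda>p. cnj (\<psi> p) * \<psi> p) summable_on UNIV"
    using abs_summable_summable[OF summable_norm_cnj_mult[OF \<psi>H \<psi>H]] .
  have "H_inner \<psi> ?w = (\<Sum>\<^sub>\<infinity>p. cnj (\<psi> p) * opA k \<kappa> \<psi> p - of_real l * (cnj (\<psi> p) * \<psi> p))"
    unfolding H_inner_def by (simp add: algebra_simps)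
  also have "\<dots> = (\<Sum>\<^sub>\<infinity>p. cnj (\<psi> p) * opA k \<kappa> \<psi> p) - of_real l * H_inner \<psi> \<psi>"
    unfolding H_inner_def
    by (simp add: infsum_diff[OF A(1) summable_on_cmult_right[OF self]] infsum_cmult_right')
  finally have "Re (H_inner \<psi> ?w) = - (\<kappa> / 2) * number_b \<psi> - l * H_sqnorm \<psi>"
    using A(2) H_inner_self[OF \<psi>H] by simp
  moreover have "- Re (H_inner \<psi> ?w) \<le> H_norm \<psi> * H_norm ?w"
    using H_inner_Cauchy_Schwarz[OF \<psi>H w] abs_Re_le_cmod[of "H_inner \<psi> ?w"] by linarith
  ultimately show ?thesis by linarith
qed

lemma opA_weighted_bound:
  assumes "1 \<le> l" "0 < \<kappa>"
    and \<psi>: "in_Hpq (2 * k) 2 \<psi>"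
    and w: "in_H (\<lambda>p. opA k \<kappa> \<psi> p - of_real l * \<psi> p)"
  shows "H_sqnorm (b_weight \<psi>) \<le> (2 + 1 / \<kappa>) / l * H_sqnorm (\<lambda>p. opA k \<kappa> \<psi> p - of_real l * \<psi> p)"
proof -
  have "in_Hpq 0 1 \<psi>" by (rule in_Hpq_imp_in_Hpq_0_1[OF _ \<psi>]) simp
  have "2 * (H_norm \<psi>)\<^sup>2 + number_b \<psi>
      \<le> (2 + 1 / \<kappa>) / l * (H_norm (\<lambda>p. opA k \<kappa> \<psi> p - of_real l * \<psi> p))\<^sup>2"
    using opA_coercive[OF \<psi> w] assms(1,2)
    by (intro coercive_bound H_norm_nonneg number_b_nonneg) (simp_all add: H_norm_square)
  then show ?thesis
    by (simp add: H_norm_square H_sqnorm_b_weight[OF \<open>in_Hpq 0 1 \<psi>\<close>])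
qed

lemma opA_resolvent_bound:
  assumes k: "1 \<le> k" and l: "1 \<le> l" and \<kappa>: "0 < \<kappa>"
    and w: "in_H w" and eq: "\<And>p. opA k \<kappa> x p - of_real l * x p = w p"
  shows "in_Hpq 0 1 x" and "H_sqnorm (b_weight x) \<le> (2 + 1 / \<kappa>) / l * H_sqnorm w"
proof -
  let ?c = "(2 + 1 / \<kappa>) / l"
  have sums: "(\<Sum>p\<in>F. (cmod (b_weight x p))\<^sup>2) \<le> ?c * H_sqnorm w" if F: "finite F" for F
  proof -
    define N where "N = (\<Sum>p\<in>F. level k p)"
    define xN where "xN = (\<lambda>p. if level k p \<le> N then x p else 0)"
    define wN where "wN = (\<lambda>p. if level k p \<le> N then w p else 0)"
    have F_N: "level k p \<le> N" if "p \<in> F" for p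
      using member_le_sum[of p F "level k"] F that by (simp add: N_def)
    have xN: "in_Hpq (2 * k) 2 xN"
      unfolding xN_def by (rule in_Hpq_level_truncation[OF k])
    have eqN: "(\<lambda>p. opA k \<kappa> xN p - of_real l * xN p) = wN"
      unfolding xN_def wN_def opA_restrict[of k \<kappa> "\<lambda>M. M \<le> N"] using eq by (auto simp: fun_eq_iff)
    have wN: "in_H wN"
      unfolding wN_def by (rule in_H_mono[OF w, of _ 1]) simp
    have "H_sqnorm wN \<le> H_sqnorm w"
      unfolding wN_def by (rule H_sqnorm_mono[OF w]) simp
    have "(\<Sum>p\<in>F. (cmod (b_weight x p))\<^sup>2) = (\<Sum>p\<in>F. (cmod (b_weight xN p))\<^sup>2)"
      using F_N by (intro sum.cong) (simp_all add: xN_def b_weight_def)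
    also have "\<dots> \<le> H_sqnorm (b_weight xN)"
      using xN F by (intro sum_le_H_sqnorm) (simp add: in_Hpq_0_1_iff[symmetric] in_Hpq_level_truncation[OF k] xN_def)
    also have "\<dots> \<le> ?c * H_sqnorm wN"
      using opA_weighted_bound[OF l \<kappa> xN] wN eqN by simp
    also have "\<dots> \<le> ?c * H_sqnorm w"
      using \<open>H_sqnorm wN \<le> H_sqnorm w\<close> l \<kappa> by (intro mult_left_mono) auto
    finally show ?thesis .
  qed
  show "in_Hpq 0 1 x"
    unfolding in_Hpq_0_1_iff by (rule finite_sums_bounded_imp_in_H(1)[OF sums])
  show "H_sqnorm (b_weight x) \<le> ?c * H_sqnorm w"
    by (rule finite_sums_bounded_imp_in_H(2)[OF sums])
qed

lemma opA_block_solvable: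
  assumes k: "1 \<le> k" and \<kappa>: "0 < \<kappa>" and l: "0 < l"
  shows "\<exists>v. (\<lambda>p. opA k \<kappa> v p - of_real l * v p) = (\<lambda>p. if level k p = N then w p else 0)"
proof -
  let ?T = "\<lambda>f p. opA k \<kappa> f p - of_real l * f p"
  have "\<exists>v. {p. v p \<noteq> 0} \<subseteq> {p. level k p = N} \<and> ?T v = (\<lambda>p. if level k p = N then w p else 0)"
  proof (rule finite_support_inj_imp_surj)
    show "finite {p. level k p = N}"
      using finite_level_le[OF k, of N] by (rule finite_subset[rotated]) auto
    show "?T (\<lambda>p. f p + g p) = (\<lambda>p. ?T f p + ?T g p)" for f g
      by (simp add: opA_add fun_eq_iff algebra_simps)
    show "?T (\<lambda>p. c * f p) = (\<lambda>p. c * ?T f p)" for c f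
      by (simp add: opA_cmult fun_eq_iff algebra_simps)
    show "{p. ?T f p \<noteq> 0} \<subseteq> {p. level k p = N}" if "{p. f p \<noteq> 0} \<subseteq> {p. level k p = N}" for f
    proof -
      have fN: "(\<lambda>p. if level k p = N then f p else 0) = f"
        using that by (auto simp: fun_eq_iff)
      have opA_f: "opA k \<kappa> f = (\<lambda>p. if level k p = N then opA k \<kappa> f p else 0)"
        using opA_restrict[of k \<kappa> "\<lambda>M. M = N" f] unfolding fN .
      show ?thesis
      proof (rule subsetI, rule ccontr)
        fix p assume "p \<in> {p. ?T f p \<noteq> 0}" "p \<notin> {p. level k p = N}"
        moreover have "opA k \<kappa> f p = 0"
          using fun_cong[OF opA_f, of p] \<open>p \<notin> _\<close> by simp
        moreover have "f p = 0" using that \<open>p \<notin> _\<close> by blast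
        ultimately show False by simp
      qed
    qed
    show "f = (\<lambda>_. 0)" if f: "{p. f p \<noteq> 0} \<subseteq> {p. level k p = N}" and Tf: "?T f = (\<lambda>_. 0)" for f
    proof -
      have fin: "finite {p. f p \<noteq> 0}"
        by (rule finite_subset[OF _ finite_level_le[OF k, of N]]) (use f in auto)
      have "in_H (?T f)" unfolding Tf by (rule in_H_zero)
      from opA_coercive[OF in_Hpq_finite_support[OF fin] this]
      have "l * H_sqnorm f + \<kappa> / 2 * number_b f \<le> 0"
        unfolding Tf by (simp add: H_norm_def)
      moreover have "0 \<le> \<kappa> / 2 * number_b f"
        using \<kappa> number_b_nonneg[of f] by simp
      ultimately have "l * H_sqnorm f \<le> 0" by linarith
      then have "H_sqnorm f \<le> 0"
        using l by (simp add: mult_le_0_iff)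
      then show ?thesis
        using H_sqnorm_eq_0_imp[OF in_H_finite_support[OF fin]] H_sqnorm_nonneg[of f] by simp
    qed
  qed auto
  then show ?thesis by blast
qed

lemma opA_solvable:
  assumes k: "1 \<le> k" and \<kappa>: "0 < \<kappa>" and l: "0 < l"
  shows "\<exists>x. \<forall>p. opA k \<kappa> x p - of_real l * x p = w p"
proof -
  let ?T = "\<lambda>f p. opA k \<kappa> f p - of_real l * f p"
  have "\<forall>N. \<exists>v. ?T v = (\<lambda>p. if level k p = N then w p else 0)"
    using opA_block_solvable[OF k \<kappa> l] by blast
  from choice[OF this] obtain v where "\<forall>N. ?T (v N) = (\<lambda>p. if level k p = N then w p else 0)"
    by blast
  then have v: "\<And>N. ?T (v N) = (\<lambda>p. if level k p = N then w p else 0)"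
    by blast
  have "?T (\<lambda>q. v (level k q) q) p = w p" for p
  proof -
    have "opA k \<kappa> (\<lambda>q. v (level k q) q) p = opA k \<kappa> (v (level k p)) p"
      by (rule opA_local) simp
    then show ?thesis
      using fun_cong[OF v[of "level k p"], of p] by simp
  qed
  then show ?thesis by blast
qed

section \<open>Surjectivity of the closure minus lambda\<close>

lemma opA_resolvent_contraction:
  assumes k: "1 \<le> k" and \<kappa>: "0 < \<kappa>" and l: "1 \<le> l"
    and small: "4 * (\<alpha> ^ k)\<^sup>2 * ((2 + 1 / \<kappa>) / l) \<le> 1 / 4"
    and u1: "in_Hpq 0 1 u1" and u2: "in_Hpq 0 1 u2"
    and x1: "\<And>p. opA k \<kappa> x1 p - of_real l * x1 p = f p - opB k \<alpha> u1 p"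
    and x2: "\<And>p. opA k \<kappa> x2 p - of_real l * x2 p = f p - opB k \<alpha> u2 p"
  shows "H_norm (b_weight (\<lambda>p. x1 p - x2 p)) \<le> 1 / 2 * H_norm (b_weight (\<lambda>p. u1 p - u2 p))"
proof -
  let ?c = "(2 + 1 / \<kappa>) / l"
  let ?u = "\<lambda>p. u2 p - u1 p" and ?d = "\<lambda>p. x1 p - x2 p"
  have u: "in_Hpq 0 1 ?u"
    using in_H_diff[OF u2[unfolded in_Hpq_0_1_iff] u1[unfolded in_Hpq_0_1_iff]]
    unfolding in_Hpq_0_1_iff b_weight_diff .
  have "opA k \<kappa> ?d p - of_real l * ?d p = opB k \<alpha> ?u p" for p
  proof -
    have "opA k \<kappa> ?d p - of_real l * ?d p
        = (opA k \<kappa> x1 p - of_real l * x1 p) - (opA k \<kappa> x2 p - of_real l * x2 p)"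
      by (simp add: opA_diff algebra_simps)
    also have "\<dots> = (f p - opB k \<alpha> u1 p) - (f p - opB k \<alpha> u2 p)"
      by (simp only: x1 x2)
    also have "\<dots> = opB k \<alpha> ?u p"
      by (simp add: opB_diff)
    finally show ?thesis .
  qed
  from opA_resolvent_bound(2)[OF k l \<kappa> opB_bound(1)[OF u] this]
  have "H_sqnorm (b_weight ?d) \<le> ?c * H_sqnorm (opB k \<alpha> ?u)" .
  also have "\<dots> \<le> ?c * (4 * (\<alpha> ^ k)\<^sup>2 * H_sqnorm (b_weight ?u))"
    using \<kappa> l by (intro mult_left_mono opB_bound(2)[OF u]) auto
  also have "\<dots> = (4 * (\<alpha> ^ k)\<^sup>2 * ?c) * H_sqnorm (b_weight ?u)"
    by simp
  also have "\<dots> \<le> 1 / 4 * H_sqnorm (b_weight ?u)"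
    using small H_sqnorm_nonneg[of "b_weight ?u"] by (rule mult_right_mono)
  finally have "H_sqnorm (b_weight ?d) \<le> 1 / 4 * H_sqnorm (b_weight ?u)" .
  moreover have "H_norm (b_weight ?u) = H_norm (b_weight (\<lambda>p. u1 p - u2 p))"
    unfolding b_weight_diff by (rule H_norm_minus_commute)
  ultimately have "(H_norm (b_weight ?d))\<^sup>2 \<le> 1 / 4 * (H_norm (b_weight (\<lambda>p. u1 p - u2 p)))\<^sup>2"
    by (simp flip: H_norm_square)
  also have "\<dots> = (1 / 2 * H_norm (b_weight (\<lambda>p. u1 p - u2 p)))\<^sup>2"
    by (simp add: power2_eq_square)
  finally have "(H_norm (b_weight ?d))\<^sup>2 \<le> (1 / 2 * H_norm (b_weight (\<lambda>p. u1 p - u2 p)))\<^sup>2" .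
  then show ?thesis
    by (rule power2_le_imp_le) (simp add: H_norm_nonneg)
qed

lemma opG_minus_solvable:
  assumes k: "1 \<le> k" and \<kappa>: "0 < \<kappa>" and l: "1 \<le> l"
    and small: "4 * (\<alpha> ^ k)\<^sup>2 * ((2 + 1 / \<kappa>) / l) \<le> 1 / 4"
    and f: "in_H f"
  shows "\<exists>v. in_Hpq 0 1 v \<and> in_H (opA k \<kappa> v) \<and> (\<forall>p. opA k \<kappa> v p + opB k \<alpha> v p - of_real l * v p = f p)"
proof -
  have "\<forall>w. \<exists>x. \<forall>p. opA k \<kappa> x p - of_real l * x p = w p"
    using opA_solvable[OF k \<kappa>] l by simp
  from choice[OF this] obtain R where "\<forall>w p. opA k \<kappa> (R w) p - of_real l * R w p = w p"
    by blast
  then have R: "\<And>w p. opA k \<kappa> (R w) p - of_real l * R w p = w p"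
    by blast
  define unweight :: "state \<Rightarrow> state" where
    "unweight z = (\<lambda>p. z p / of_real (sqrt (2 + real (snd p))))" for z
  have weight_unweight: "b_weight (unweight z) = z" for z
    unfolding unweight_def by (rule b_weight_divide)
  (* F is v \<mapsto> (A - l)^-1 (f - B v) in the coordinates z = b_weight v, where it contracts H. *)
  define F where "F z = b_weight (R (\<lambda>p. f p - opB k \<alpha> (unweight z) p))" for z
  have u: "in_Hpq 0 1 (unweight z)" if "in_H z" for z
    using that unfolding in_Hpq_0_1_iff weight_unweight .
  have w: "in_H (\<lambda>p. f p - opB k \<alpha> (unweight z) p)" if "in_H z" for z
    using f opB_bound(1)[OF u[OF that]] by (rule in_H_diff)
  have F: "in_H (F z)" if "in_H z" for z
    using opA_resolvent_bound(1)[OF k l \<kappa> w[OF that] R] unfolding F_def in_Hpq_0_1_iff .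
  have contraction: "H_norm (\<lambda>p. F z1 p - F z2 p) \<le> 1 / 2 * H_norm (\<lambda>p. z1 p - z2 p)"
    if "in_H z1" "in_H z2" for z1 z2
    using opA_resolvent_contraction[OF k \<kappa> l small u[OF that(1)] u[OF that(2)] R R]
    by (simp add: F_def b_weight_diff weight_unweight)
  have "\<exists>z. in_H z \<and> F z = z"
    by (rule H_contraction_fixpoint[OF F contraction]) simp_all
  then obtain z where z: "in_H z" "F z = z"
    by blast
  define v where "v = unweight z"
  have "b_weight (R (\<lambda>p. f p - opB k \<alpha> v p)) = b_weight v"
    using z(2) by (simp add: F_def v_def weight_unweight)
  then have "R (\<lambda>p. f p - opB k \<alpha> v p) = v"
    by (rule b_weight_inject)
  then have eq: "opA k \<kappa> v p - of_real l * v p = f p - opB k \<alpha> v p" for p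
    using R[of "\<lambda>p. f p - opB k \<alpha> v p" p] by simp
  have v: "in_Hpq 0 1 v" unfolding v_def by (rule u[OF z(1)])
  have "in_H (\<lambda>p. (f p - opB k \<alpha> v p) + of_real l * v p)"
    using f opB_bound(1)[OF v] in_Hpq_imp_in_H[OF v] by (intro in_H_add in_H_diff in_H_cmult)
  moreover have "(\<lambda>p. (f p - opB k \<alpha> v p) + of_real l * v p) = opA k \<kappa> v"
    using eq by (simp add: fun_eq_iff algebra_simps)
  ultimately show ?thesis
    using v eq by (auto simp: algebra_simps)
qed

lemma opG_level_truncation:
  "opG k \<alpha> \<kappa> (\<lambda>p. if level k p \<le> N then v p else 0)
     = (\<lambda>p. opG k \<alpha> \<kappa> v p - ((if level k p \<le> N then 0 else opA k \<kappa> v p)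
                              + opB k \<alpha> (\<lambda>q. if level k q \<le> N then 0 else v q) p))"
proof -
  have A: "opA k \<kappa> (\<lambda>p. if level k p \<le> N then v p else 0) = (\<lambda>p. if level k p \<le> N then opA k \<kappa> v p else 0)"
    by (rule opA_restrict)
  have "(\<lambda>p. if level k p \<le> N then v p else 0) = (\<lambda>p. v p - (if level k p \<le> N then 0 else v p))"
    by (simp add: fun_eq_iff)
  then have B: "opB k \<alpha> (\<lambda>p. if level k p \<le> N then v p else 0)
      = (\<lambda>p. opB k \<alpha> v p - opB k \<alpha> (\<lambda>q. if level k q \<le> N then 0 else v q) p)"
    by (simp only: opB_diff)
  show ?thesis
    by (simp add: opG_eq_opA_plus_opB A B fun_eq_iff algebra_simps)
qed

lemma graph_closure_opG:
  assumes k: "1 \<le> k" and v: "in_Hpq 0 1 v" and A: "in_H (opA k \<kappa> v)"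
  shows "(v, opG k \<alpha> \<kappa> v) \<in> closure_graph {\<psi>. in_Hpq (2 * k) 2 \<psi>} (opG k \<alpha> \<kappa>)"
proof -
  define s where "s N = (\<lambda>p. if level k p \<le> N then v p else 0)" for N
  define tail where "tail \<psi> N = (\<lambda>p. if level k p \<le> N then 0 else \<psi> p)" for \<psi> :: state and N
  have tail_tendsto: "(\<lambda>N. H_norm (tail \<psi> N)) \<longlonglongrightarrow> 0" if "in_H \<psi>" for \<psi>
    unfolding tail_def by (rule H_tail_tendsto_0[OF that])
  have tail_in_H: "in_H (tail \<psi> N)" if "in_H \<psi>" for \<psi> N
    unfolding tail_def by (rule in_H_mono[OF that, of _ 1]) simp
  have vH: "in_H v" by (rule in_Hpq_imp_in_H[OF v])
  have wv: "in_H (b_weight v)" using v unfolding in_Hpq_0_1_iff .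
  have bw: "b_weight (tail v N) = tail (b_weight v) N" for N
    by (simp add: tail_def b_weight_def fun_eq_iff)
  have tail_v: "in_Hpq 0 1 (tail v N)" for N
    unfolding in_Hpq_0_1_iff bw by (rule tail_in_H[OF wv])
  have opG_s: "opG k \<alpha> \<kappa> (s N)
      = (\<lambda>p. opG k \<alpha> \<kappa> v p - (tail (opA k \<kappa> v) N p + opB k \<alpha> (tail v N) p))" for N
    unfolding s_def tail_def by (rule opG_level_truncation)
  have opGv: "in_H (opG k \<alpha> \<kappa> v)"
    unfolding opG_eq_opA_plus_opB by (intro in_H_add A opB_bound(1)[OF v])
  have "H_conv s v"
    unfolding s_def by (rule H_conv_truncation[OF vH])
  moreover have "H_conv (\<lambda>N. opG k \<alpha> \<kappa> (s N)) (opG k \<alpha> \<kappa> v)"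
  proof (rule H_convI[OF opGv])
    show "in_H (opG k \<alpha> \<kappa> (s N))" for N
      unfolding opG_s by (intro in_H_diff in_H_add opGv tail_in_H[OF A] opB_bound(1)[OF tail_v])
    show "H_norm (\<lambda>p. opG k \<alpha> \<kappa> (s N) p - opG k \<alpha> \<kappa> v p)
        \<le> H_norm (tail (opA k \<kappa> v) N) + 2 * \<bar>\<alpha> ^ k\<bar> * H_norm (tail (b_weight v) N)" for N
    proof -
      have "H_norm (opB k \<alpha> (tail v N)) \<le> 2 * \<bar>\<alpha> ^ k\<bar> * H_norm (tail (b_weight v) N)"
        using H_norm_opB_le[OF tail_v[of N], of k \<alpha>] unfolding bw .
      moreover have diff: "(\<lambda>p. opG k \<alpha> \<kappa> (s N) p - opG k \<alpha> \<kappa> v p)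
          = (\<lambda>p. - (tail (opA k \<kappa> v) N p + opB k \<alpha> (tail v N) p))"
        by (simp add: opG_s fun_eq_iff)
      ultimately show ?thesis
        unfolding diff H_norm_uminus
        using H_norm_triangle[OF tail_in_H[OF A, of N] opB_bound(1)[OF tail_v[of N], of k \<alpha>]]
        by linarith
    qed
    show "(\<lambda>N. H_norm (tail (opA k \<kappa> v) N) + 2 * \<bar>\<alpha> ^ k\<bar> * H_norm (tail (b_weight v) N)) \<longlonglongrightarrow> 0"
      using tendsto_add[OF tail_tendsto[OF A] tendsto_mult_right_zero[OF tail_tendsto[OF wv]]] by simp
  qed
  moreover have "in_Hpq (2 * k) 2 (s N)" for N
    unfolding s_def by (rule in_Hpq_level_truncation[OF k])
  ultimately show ?thesis
    unfolding closure_graph_def by blast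
qed

lemma opG_closure_minus_surj:
  assumes k: "1 \<le> k" and \<kappa>: "0 < \<kappa>"
  defines "D \<equiv> {\<psi>. in_Hpq (2 * k) 2 \<psi>}"
  shows "\<exists>l>0. \<forall>f. in_H f \<longrightarrow>
           (\<exists>u\<in>closure_dom D (opG k \<alpha> \<kappa>). (\<lambda>p. closure_op D (opG k \<alpha> \<kappa>) u p - of_real l * u p) = f)"
proof -
  define l where "l = 1 + 16 * ((\<alpha> ^ k)\<^sup>2 * (2 + 1 / \<kappa>))"
  have X: "0 \<le> (\<alpha> ^ k)\<^sup>2 * (2 + 1 / \<kappa>)" using \<kappa> by simp
  then have l: "1 \<le> l" by (simp add: l_def)
  have "4 * (\<alpha> ^ k)\<^sup>2 * ((2 + 1 / \<kappa>) / l) = 4 * ((\<alpha> ^ k)\<^sup>2 * (2 + 1 / \<kappa>)) / l"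
    by simp
  also have "\<dots> \<le> 1 / 4"
    using X l by (simp add: l_def divide_le_eq)
  finally have small: "4 * (\<alpha> ^ k)\<^sup>2 * ((2 + 1 / \<kappa>) / l) \<le> 1 / 4" .
  have "\<exists>u\<in>closure_dom D (opG k \<alpha> \<kappa>). (\<lambda>p. closure_op D (opG k \<alpha> \<kappa>) u p - of_real l * u p) = f"
    if f: "in_H f" for f
  proof -
    obtain v where v: "in_Hpq 0 1 v" "in_H (opA k \<kappa> v)"
      and eq: "\<And>p. opA k \<kappa> v p + opB k \<alpha> v p - of_real l * v p = f p"
      using opG_minus_solvable[OF k \<kappa> l small f] by blast
    have "(v, opG k \<alpha> \<kappa> v) \<in> closure_graph D (opG k \<alpha> \<kappa>)"
      unfolding D_def by (rule graph_closure_opG[OF k v])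
    then have dom: "v \<in> closure_dom D (opG k \<alpha> \<kappa>)"
      by (auto simp: closure_dom_def)
    have "(\<lambda>p. closure_op D (opG k \<alpha> \<kappa>) v p - of_real l * v p) = f"
      using eq by (simp add: closure_op_opG(1)[OF dom] opG_eq_opA_plus_opB fun_eq_iff)
    with dom show ?thesis by blast
  qed
  moreover have "l > 0" using l by simp
  ultimately show ?thesis by blast
qed

theorem lemma4:
  fixes k :: nat and \<alpha> \<kappa> :: real
  assumes "k \<ge> 1" and "\<kappa> > 0"
  shows "closable {\<psi>. in_Hpq (2*k) 2 \<psi>} (opG k \<alpha> \<kappa>)
       \<and> max_dissipative (closure_dom {\<psi>. in_Hpq (2*k) 2 \<psi>} (opG k \<alpha> \<kappa>))
                         (closure_op {\<psi>. in_Hpq (2*k) 2 \<psi>} (opG k \<alpha> \<kappa>))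
       \<and> closure_dom {\<psi>. in_Hpq (2*k) 2 \<psi>} (opG k \<alpha> \<kappa>) \<subseteq> {\<psi>. in_Hpq 0 1 \<psi>}"
proof (intro conjI)
  let ?D = "{\<psi>. in_Hpq (2*k) 2 \<psi>}"
  show "closable ?D (opG k \<alpha> \<kappa>)"
    by (rule closable_opG)
  show "closure_dom ?D (opG k \<alpha> \<kappa>) \<subseteq> {\<psi>. in_Hpq 0 1 \<psi>}"
    using closure_dom_opG(1)[OF assms(2)] by blast
  have "in_H u \<and> in_H (closure_op ?D (opG k \<alpha> \<kappa>) u)
      \<and> Re (H_inner u (closure_op ?D (opG k \<alpha> \<kappa>) u)) \<le> 0"
    if u: "u \<in> closure_dom ?D (opG k \<alpha> \<kappa>)" for u
    using in_Hpq_imp_in_H[OF closure_dom_opG(1)[OF assms(2) u]] closure_dom_opG(2,3)[OF assms(2) u]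
    by (simp add: closure_op_opG(1)[OF u])
  then show "max_dissipative (closure_dom ?D (opG k \<alpha> \<kappa>)) (closure_op ?D (opG k \<alpha> \<kappa>))"
    unfolding max_dissipative_def using opG_closure_minus_surj[OF assms] by blast
qed

end
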